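(* Let $T$ be a complete o-minimal theory expanding the theory of real closed ordered fields, let $(\mathbb{E},\mathcal{O})\models T_{\mathrm{convex}}$, let $\mathbb{U}\succ\mathbb{E}$, and let $b\in\mathbb{U}\setminus\mathbb{E}$ satisfy $\mathcal{O}<b<\mathbb{E}^{>\mathcal{O}}$. Let $f:\mathbb{U}\to\mathbb{U}$ be $\mathbb{E}$-definable. If $f(b)\in\mathfrak{o}_b$, then $f'(b)\in\mathfrak{o}_b$. If $f(b)\in\mathfrak{o}_b^-$, then $f'(b)\in\mathfrak{o}_b^-$.
   Context: $T_{\mathrm{convex}}$ is the theory of pairs $(\mathbb{E},\mathcal{O})$ with $\mathbb{E}\models T$ and $\mathcal{O}\ne\mathbb{E}$ a convex subring closed under all continuous $\emptyset$-definable functions. $\mathcal{O}<b<\mathbb{E}^{>\mathcal{O}}$ means $b$ exceeds every element of $\mathcal{O}$ and is smaller than every element of $\mathbb{E}$ exceeding all of $\mathcal{O}$. With $\mathbb{E}\langle b\rangle$ the $T$-definable closure of $\mathbb{E}\cup\{b\}$ in $\mathbb{U}$: $\mathcal{O}_b:=\{y\in\mathbb{E}\langle b\rangle:|y|<e\text{ for all }e\in\mathbb{E}^{>\mathcal{O}}\}$, $\mathcal{O}_b^-$ the convex hull of $\mathcal{O}$ in $\mathbb{E}\langle b\rangle$, and $\mathfrak{o}_b,\mathfrak{o}_b^-$ their respective maximal ideals. *)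

theory Defs
  imports Main
begin

text \<open>First-order formulas over a relational signature 'r, de Bruijn variables.
  (Any first-order language is interdefinable with a relational one.)\<close>
datatype 'r fm = Rel 'r "nat list" | Eq nat nat | Neg "'r fm" | Conj "'r fm" "'r fm" | Ex "'r fm"

definition cons_env :: "'a \<Rightarrow> (nat \<Rightarrow> 'a) \<Rightarrow> nat \<Rightarrow> 'a" where
  "cons_env x v n = (case n of 0 \<Rightarrow> x | Suc m \<Rightarrow> v m)"

definition list_env :: "'a list \<Rightarrow> (nat \<Rightarrow> 'a) \<Rightarrow> nat \<Rightarrow> 'a" where
  "list_env xs v n = (if n < length xs then xs ! n else v (n - length xs))"

fun sat :: "'u set \<Rightarrow> ('r \<Rightarrow> 'u list \<Rightarrow> bool) \<Rightarrow> 'r fm \<Rightarrow> (nat \<Rightarrow> 'u) \<Rightarrow> bool" where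
  "sat D I (Rel r xs) v = I r (map v xs)"
| "sat D I (Eq i j) v = (v i = v j)"
| "sat D I (Neg \<phi>) v = (\<not> sat D I \<phi> v)"
| "sat D I (Conj \<phi> \<psi>) v = (sat D I \<phi> v \<and> sat D I \<psi> v)"
| "sat D I (Ex \<phi>) v = (\<exists>x\<in>D. sat D I \<phi> (cons_env x v))"

fun fv :: "'r fm \<Rightarrow> nat set" where
  "fv (Rel r xs) = set xs"
| "fv (Eq i j) = {i, j}"
| "fv (Neg \<phi>) = fv \<phi>"
| "fv (Conj \<phi> \<psi>) = fv \<phi> \<union> fv \<psi>"
| "fv (Ex \<phi>) = {n. Suc n \<in> fv \<phi>}"

text \<open>A k-ary relation P on D is definable in (D,I) with parameters from A:
  variables 0..k-1 are the arguments, the remaining free variables are parameters from A.\<close>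
definition definable_rel :: "'u set \<Rightarrow> ('r \<Rightarrow> 'u list \<Rightarrow> bool) \<Rightarrow> 'u set \<Rightarrow> nat \<Rightarrow> ('u list \<Rightarrow> bool) \<Rightarrow> bool" where
  "definable_rel D I A k P \<longleftrightarrow>
     (\<exists>(\<phi>::'r fm) v. range v \<subseteq> D \<and> (\<forall>n. k + n \<in> fv \<phi> \<longrightarrow> v n \<in> A) \<and>
        (\<forall>xs. length xs = k \<and> set xs \<subseteq> D \<longrightarrow> (sat D I \<phi> (list_env xs v) \<longleftrightarrow> P xs)))"

definition definable_set :: "'u set \<Rightarrow> ('r \<Rightarrow> 'u list \<Rightarrow> bool) \<Rightarrow> 'u set \<Rightarrow> 'u set \<Rightarrow> bool" where
  "definable_set D I A X \<longleftrightarrow> X \<subseteq> D \<and> definable_rel D I A 1 (\<lambda>xs. xs ! 0 \<in> X)"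

definition definable_fun :: "'u set \<Rightarrow> ('r \<Rightarrow> 'u list \<Rightarrow> bool) \<Rightarrow> 'u set \<Rightarrow> ('u \<Rightarrow> 'u) \<Rightarrow> bool" where
  "definable_fun D I A f \<longleftrightarrow> f ` D \<subseteq> D \<and> definable_rel D I A 2 (\<lambda>xs. xs ! 1 = f (xs ! 0))"

definition elementary_sub :: "('r \<Rightarrow> 'u list \<Rightarrow> bool) \<Rightarrow> 'u set \<Rightarrow> bool" where
  "elementary_sub I E \<longleftrightarrow> E \<noteq> {} \<and>
     (\<forall>(\<phi>::'r fm) v. range v \<subseteq> E \<longrightarrow> (sat E I \<phi> v \<longleftrightarrow> sat UNIV I \<phi> v))"

definition basic_interval :: "('u::linorder) set \<Rightarrow> 'u set \<Rightarrow> bool" where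
  "basic_interval D J \<longleftrightarrow>
     (\<exists>a\<in>D. J = {a}) \<or> (\<exists>a\<in>D. \<exists>c\<in>D. J = {x\<in>D. a < x \<and> x < c}) \<or>
     (\<exists>a\<in>D. J = {x\<in>D. a < x}) \<or> (\<exists>c\<in>D. J = {x\<in>D. x < c}) \<or> J = D"

definition o_minimal :: "('u::linorder) set \<Rightarrow> ('r \<Rightarrow> 'u list \<Rightarrow> bool) \<Rightarrow> bool" where
  "o_minimal D I \<longleftrightarrow> (\<forall>X. definable_set D I D X \<longrightarrow>
      (\<exists>F. finite F \<and> X = \<Union>F \<and> (\<forall>J\<in>F. basic_interval D J)))"

definition continuous_on_dom :: "('u::linordered_field) set \<Rightarrow> ('u \<Rightarrow> 'u) \<Rightarrow> bool" where
  "continuous_on_dom D f \<longleftrightarrow> (\<forall>x\<in>D. \<forall>\<epsilon>\<in>D. \<epsilon> > 0 \<longrightarrow>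
      (\<exists>\<delta>\<in>D. \<delta> > 0 \<and> (\<forall>y\<in>D. \<bar>y - x\<bar> < \<delta> \<longrightarrow> \<bar>f y - f x\<bar> < \<epsilon>)))"

definition T_convex :: "('r \<Rightarrow> ('u::linordered_field) list \<Rightarrow> bool) \<Rightarrow> 'u set \<Rightarrow> 'u set \<Rightarrow> bool" where
  "T_convex I E Ov \<longleftrightarrow> Ov \<subseteq> E \<and> Ov \<noteq> E \<and> 0 \<in> Ov \<and> 1 \<in> Ov \<and>
     (\<forall>x\<in>Ov. \<forall>y\<in>Ov. x + y \<in> Ov \<and> x - y \<in> Ov \<and> x * y \<in> Ov) \<and>
     (\<forall>x\<in>Ov. \<forall>y\<in>Ov. \<forall>z\<in>E. x \<le> z \<and> z \<le> y \<longrightarrow> z \<in> Ov) \<and>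
     (\<forall>f. definable_fun E I {} f \<and> continuous_on_dom E f \<longrightarrow> f ` Ov \<subseteq> Ov)"

definition dcl :: "('r \<Rightarrow> 'u list \<Rightarrow> bool) \<Rightarrow> 'u set \<Rightarrow> 'u set" where
  "dcl I A = {y. definable_rel UNIV I A 1 (\<lambda>xs. xs ! 0 = y)}"

definition Ob :: "('r \<Rightarrow> ('u::linordered_field) list \<Rightarrow> bool) \<Rightarrow> 'u set \<Rightarrow> 'u set \<Rightarrow> 'u \<Rightarrow> 'u set" where
  "Ob I E Ov b = {y \<in> dcl I (insert b E). \<forall>e\<in>E. (\<forall>u\<in>Ov. u < e) \<longrightarrow> \<bar>y\<bar> < e}"

definition Ob_minus :: "('r \<Rightarrow> ('u::linordered_field) list \<Rightarrow> bool) \<Rightarrow> 'u set \<Rightarrow> 'u set \<Rightarrow> 'u \<Rightarrow> 'u set" where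
  "Ob_minus I E Ov b = {y \<in> dcl I (insert b E). \<exists>o1\<in>Ov. \<exists>o2\<in>Ov. o1 \<le> y \<and> y \<le> o2}"

text \<open>Maximal ideal of a local ring R: its non-units.\<close>
definition max_ideal :: "('u::field) set \<Rightarrow> 'u set" where
  "max_ideal R = {y \<in> R. \<forall>z\<in>R. y * z \<noteq> 1}"

definition has_deriv_at :: "(('u::linordered_field) \<Rightarrow> 'u) \<Rightarrow> 'u \<Rightarrow> 'u \<Rightarrow> bool" where
  "has_deriv_at f b d \<longleftrightarrow> (\<forall>\<epsilon>>0. \<exists>\<delta>>0. \<forall>x. x \<noteq> b \<and> \<bar>x - b\<bar> < \<delta> \<longrightarrow>
      \<bar>(f x - f b) / (x - b) - d\<bar> < \<epsilon>)"

end

theory Submission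
  imports Defs
begin

(*
  Since b lies outside the elementary substructure E, it is generic for E-definable sets: an
  E-definable finite set lies inside E, so b is an interior point of every E-definable set
  containing it, and such a set even contains [b, c) up to some c in E or all of [b, oo).
  The o-minimal analysis at generic points (no jumps, no infinite slopes, no corners) makes every
  E-definable f continuous and differentiable at b.

  The key estimate: if |f b| <= r and c < |f'(b)| with r, c in E, then [b, 2b] lies in the
  E-definable set where |f| <= r and the slopes of f exceed c, because 2b is still below every
  element of E above O; the resulting mean value inequality gives c b <= 2 r. As b lies above O,
  taking r = c = 1/e for e in E above O, respectively r = 1/(4u) and c = 1/(2u) for u in O,
  shows that f'(b) is as small as f(b) with respect to both maximal ideals.
*)

section \<open>First-order formulas\<close>

definition lift_renaming :: "(nat \<Rightarrow> nat) \<Rightarrow> nat \<Rightarrow> nat" where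
  "lift_renaming \<sigma> n = (case n of 0 \<Rightarrow> 0 | Suc m \<Rightarrow> Suc (\<sigma> m))"

fun rename :: "(nat \<Rightarrow> nat) \<Rightarrow> 'r fm \<Rightarrow> 'r fm" where
  "rename \<sigma> (Rel r xs) = Rel r (map \<sigma> xs)"
| "rename \<sigma> (Eq i j) = Eq (\<sigma> i) (\<sigma> j)"
| "rename \<sigma> (Neg \<phi>) = Neg (rename \<sigma> \<phi>)"
| "rename \<sigma> (Conj \<phi> \<psi>) = Conj (rename \<sigma> \<phi>) (rename \<sigma> \<psi>)"
| "rename \<sigma> (Ex \<phi>) = Ex (rename (lift_renaming \<sigma>) \<phi>)"

lemma cons_env_0 [simp]: "cons_env x v 0 = x"
  and cons_env_Suc [simp]: "cons_env x v (Suc n) = v n"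
  by (simp_all add: cons_env_def)

lemma cons_env_lift_renaming: "cons_env x v (lift_renaming \<sigma> n) = cons_env x (v \<circ> \<sigma>) n"
  by (simp add: cons_env_def lift_renaming_def split: nat.splits)

lemma sat_rename: "sat D I (rename \<sigma> \<phi>) v = sat D I \<phi> (v \<circ> \<sigma>)"
proof (induction \<phi> arbitrary: \<sigma> v)
  case (Ex \<phi>)
  then show ?case by (simp add: cons_env_lift_renaming comp_def)
qed auto

lemma fv_rename: "fv (rename \<sigma> \<phi>) = \<sigma> ` fv \<phi>"
proof (induction \<phi> arbitrary: \<sigma>)
  case (Ex \<phi>)
  have "Suc n \<in> lift_renaming \<sigma> ` fv \<phi> \<longleftrightarrow> n \<in> \<sigma> ` {n. Suc n \<in> fv \<phi>}" for n
  proof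
    assume "Suc n \<in> lift_renaming \<sigma> ` fv \<phi>"
    then obtain m where "m \<in> fv \<phi>" "Suc n = lift_renaming \<sigma> m" by auto
    then show "n \<in> \<sigma> ` {n. Suc n \<in> fv \<phi>}"
      by (cases m) (auto simp: lift_renaming_def)
  next
    assume "n \<in> \<sigma> ` {n. Suc n \<in> fv \<phi>}"
    then obtain k where "Suc k \<in> fv \<phi>" "Suc n = lift_renaming \<sigma> (Suc k)"
      by (auto simp: lift_renaming_def)
    then show "Suc n \<in> lift_renaming \<sigma> ` fv \<phi>" by (metis image_eqI)
  qed
  then show ?case using Ex by auto
qed auto

lemma sat_cong_fv: "(\<And>n. n \<in> fv \<phi> \<Longrightarrow> v n = v' n) \<Longrightarrow> sat D I \<phi> v = sat D I \<phi> v'"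
proof (induction \<phi> arbitrary: v v')
  case (Rel r xs)
  then have "map v xs = map v' xs" by simp
  then show ?case by (simp only: sat.simps)
next
  case (Eq i j)
  then have "v i = v' i" "v j = v' j" by auto
  then show ?case by (simp only: sat.simps)
next
  case (Neg \<phi>)
  have "sat D I \<phi> v = sat D I \<phi> v'" by (rule Neg.IH, rule Neg.prems) simp
  then show ?case by (simp only: sat.simps)
next
  case (Conj \<phi> \<psi>)
  have "sat D I \<phi> v = sat D I \<phi> v'" by (rule Conj.IH(1), rule Conj.prems) simp
  moreover have "sat D I \<psi> v = sat D I \<psi> v'" by (rule Conj.IH(2), rule Conj.prems) simp
  ultimately show ?case by (simp only: sat.simps)
next
  case (Ex \<phi>)
  have "sat D I \<phi> (cons_env x v) = sat D I \<phi> (cons_env x v')" for x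
    by (rule Ex.IH) (use Ex.prems in \<open>auto simp: cons_env_def split: nat.splits\<close>)
  then show ?case by (simp only: sat.simps)
qed

lemma finite_fv: "finite (fv \<phi>)"
proof (induction \<phi>)
  case (Ex \<phi>)
  have "{n. Suc n \<in> fv \<phi>} \<subseteq> (\<lambda>n. n - 1) ` fv \<phi>"
    by (auto intro: rev_image_eqI)
  then show ?case using Ex finite_subset by auto
qed auto

section \<open>Definability over a parameter set\<close>

locale definable_field =
  fixes I :: "'r \<Rightarrow> ('u::linordered_field) list \<Rightarrow> bool"
  assumes less_definable: "definable_rel UNIV I {} 2 (\<lambda>xs. xs ! 0 < xs ! 1)"
    and plus_definable: "definable_rel UNIV I {} 3 (\<lambda>xs. xs ! 2 = xs ! 0 + xs ! 1)"
    and times_definable: "definable_rel UNIV I {} 3 (\<lambda>xs. xs ! 2 = xs ! 0 * xs ! 1)"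
begin

text \<open>A property of assignments \<open>w\<close> is definable over \<open>A\<close> if it is expressed by a formula
  whose first variables are reserved for a list of parameters from \<open>A\<close>.\<close>

definition def_pred :: "'u set \<Rightarrow> ((nat \<Rightarrow> 'u) \<Rightarrow> bool) \<Rightarrow> bool" where
  "def_pred A P \<longleftrightarrow> (\<exists>(\<phi>::'r fm) ps. set ps \<subseteq> A \<and> (\<forall>w. P w = sat UNIV I \<phi> (list_env ps w)))"

lemma def_pred_cong: "def_pred A P \<Longrightarrow> (\<And>w. P w = Q w) \<Longrightarrow> def_pred A Q"
  unfolding def_pred_def by simp

lemma def_pred_mono: "def_pred A P \<Longrightarrow> A \<subseteq> B \<Longrightarrow> def_pred B P"
  unfolding def_pred_def by blast

lemma def_pred_neg: "def_pred A P \<Longrightarrow> def_pred A (\<lambda>w. \<not> P w)"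
  unfolding def_pred_def by (metis sat.simps(3))

lemma def_pred_conj:
  assumes "def_pred A P" "def_pred A Q"
  shows "def_pred A (\<lambda>w. P w \<and> Q w)"
proof -
  obtain \<phi>1 :: "'r fm" and ps1 where 1: "set ps1 \<subseteq> A" "\<forall>w. P w = sat UNIV I \<phi>1 (list_env ps1 w)"
    using assms(1) unfolding def_pred_def by blast
  obtain \<phi>2 :: "'r fm" and ps2 where 2: "set ps2 \<subseteq> A" "\<forall>w. Q w = sat UNIV I \<phi>2 (list_env ps2 w)"
    using assms(2) unfolding def_pred_def by blast
  define \<sigma>1 where "\<sigma>1 n = (if n < length ps1 then n else n + length ps2)" for n
  define \<sigma>2 where "\<sigma>2 n = (if n < length ps2 then length ps1 + n else n + length ps1)" for n
  have "list_env (ps1 @ ps2) w \<circ> \<sigma>1 = list_env ps1 w"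
    "list_env (ps1 @ ps2) w \<circ> \<sigma>2 = list_env ps2 w" for w
    by (auto simp: \<sigma>1_def \<sigma>2_def list_env_def nth_append)
  then have "P w \<and> Q w \<longleftrightarrow>
      sat UNIV I (Conj (rename \<sigma>1 \<phi>1) (rename \<sigma>2 \<phi>2)) (list_env (ps1 @ ps2) w)" for w
    using 1 2 by (simp add: sat_rename)
  moreover have "set (ps1 @ ps2) \<subseteq> A" using 1 2 by simp
  ultimately show ?thesis unfolding def_pred_def by blast
qed

lemma def_pred_ex: "def_pred A P \<Longrightarrow> def_pred A (\<lambda>w. \<exists>x. P (cons_env x w))"
  unfolding def_pred_def
proof (elim exE conjE)
  fix \<phi> :: "'r fm" and ps assume ps: "set ps \<subseteq> A" "\<forall>w. P w = sat UNIV I \<phi> (list_env ps w)"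
  define \<sigma> where "\<sigma> n = (if n < length ps then Suc n else if n = length ps then 0 else n)" for n
  have "cons_env x (list_env ps w) \<circ> \<sigma> = list_env ps (cons_env x w)" for x w
    by (rule ext) (auto simp: \<sigma>_def list_env_def cons_env_def Suc_diff_le split: nat.splits)
  then have "(\<exists>x. P (cons_env x w)) = sat UNIV I (Ex (rename \<sigma> \<phi>)) (list_env ps w)" for w
    using ps by (simp add: sat_rename)
  then show "\<exists>(\<phi>::'r fm) ps. set ps \<subseteq> A \<and>
      (\<forall>w. (\<exists>x. P (cons_env x w)) = sat UNIV I \<phi> (list_env ps w))"
    using ps(1) by blast
qed

lemma def_pred_subst: "def_pred A P \<Longrightarrow> def_pred A (\<lambda>w. P (w \<circ> \<sigma>))"
  unfolding def_pred_def
proof (elim exE conjE)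
  fix \<phi> :: "'r fm" and ps assume ps: "set ps \<subseteq> A" "\<forall>w. P w = sat UNIV I \<phi> (list_env ps w)"
  define \<tau> where "\<tau> n = (if n < length ps then n else length ps + \<sigma> (n - length ps))" for n
  have "list_env ps w \<circ> \<tau> = list_env ps (w \<circ> \<sigma>)" for w
    by (rule ext) (auto simp: \<tau>_def list_env_def)
  then have "P (w \<circ> \<sigma>) = sat UNIV I (rename \<tau> \<phi>) (list_env ps w)" for w
    using ps by (simp add: sat_rename)
  then show "\<exists>(\<phi>::'r fm) ps. set ps \<subseteq> A \<and> (\<forall>w. P (w \<circ> \<sigma>) = sat UNIV I \<phi> (list_env ps w))"
    using ps(1) by blast
qed

lemma def_pred_eq: "def_pred A (\<lambda>w. w i = w j)"
  unfolding def_pred_def by (intro exI[of _ "Eq i j"] exI[of _ "[]"]) (simp add: list_env_def)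

lemma def_pred_eq_param: "a \<in> A \<Longrightarrow> def_pred A (\<lambda>w. w 0 = a)"
  unfolding def_pred_def by (intro exI[of _ "Eq 1 0"] exI[of _ "[a]"]) (auto simp: list_env_def)

lemma def_pred_of_definable_rel_no_params:
  assumes "definable_rel UNIV I {} k Q"
  shows "def_pred A (\<lambda>w. Q (map w [0..<k]))"
proof -
  obtain \<phi> :: "'r fm" and v where \<phi>: "\<forall>n. k + n \<notin> fv \<phi>"
    "\<forall>xs. length xs = k \<longrightarrow> (sat UNIV I \<phi> (list_env xs v) \<longleftrightarrow> Q xs)"
    using assms unfolding definable_rel_def by auto
  have fv_less: "n < k" if "n \<in> fv \<phi>" for n
    using \<phi>(1) that by (metis le_add_diff_inverse not_less)
  have "Q (map w [0..<k]) = sat UNIV I \<phi> (list_env (map w [0..<k]) v)" for w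
    using \<phi>(2) by simp
  also have "sat UNIV I \<phi> (list_env (map w [0..<k]) v) = sat UNIV I \<phi> (list_env [] w)" for w
    by (rule sat_cong_fv) (simp add: list_env_def fv_less)
  finally show ?thesis unfolding def_pred_def by (intro exI[of _ \<phi>] exI[of _ "[]"]) simp
qed

lemma def_pred_of_definable_rel:
  assumes "definable_rel UNIV I A k Q" and "A \<noteq> {}"
  shows "def_pred A (\<lambda>w. Q (map w [0..<k]))"
proof -
  obtain \<phi> :: "'r fm" and v where \<phi>: "\<forall>n. k + n \<in> fv \<phi> \<longrightarrow> v n \<in> A"
    "\<forall>xs. length xs = k \<longrightarrow> (sat UNIV I \<phi> (list_env xs v) \<longleftrightarrow> Q xs)"
    using assms unfolding definable_rel_def by auto
  define l where "l = Suc (Max (fv \<phi>))"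
  have fv_less: "n < k + l" if "n \<in> fv \<phi>" for n
    using Max_ge[OF finite_fv that] unfolding l_def by linarith
  define ps where "ps = map (\<lambda>i. if k + i \<in> fv \<phi> then v i else (SOME a. a \<in> A)) [0..<l]"
  have ps: "set ps \<subseteq> A" "length ps = l"
    unfolding ps_def using \<phi>(1) some_in_eq assms(2) by auto
  define \<tau> where "\<tau> n = (if n < k then l + n else n - k)" for n
  have "Q (map w [0..<k]) = sat UNIV I \<phi> (list_env (map w [0..<k]) v)" for w
    using \<phi>(2) by simp
  also have "sat UNIV I \<phi> (list_env (map w [0..<k]) v) = sat UNIV I \<phi> (list_env ps w \<circ> \<tau>)" for w
  proof (rule sat_cong_fv)
    fix n assume n: "n \<in> fv \<phi>"
    show "list_env (map w [0..<k]) v n = (list_env ps w \<circ> \<tau>) n"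
    proof (cases "n < k")
      case False
      then have "n - k < l" "k + (n - k) = n" using fv_less[OF n] by auto
      with False n show ?thesis by (simp add: list_env_def \<tau>_def ps(2)) (simp add: ps_def)
    qed (simp add: list_env_def \<tau>_def ps(2))
  qed
  finally have "Q (map w [0..<k]) = sat UNIV I (rename \<tau> \<phi>) (list_env ps w)" for w
    by (simp add: sat_rename)
  then show ?thesis unfolding def_pred_def using ps(1) by blast
qed

lemma definable_rel_of_def_pred:
  assumes "def_pred A (\<lambda>w. Q (w 0))"
  shows "definable_rel UNIV I A 1 (\<lambda>xs. Q (xs ! 0))"
proof -
  obtain \<phi> :: "'r fm" and ps where ps: "set ps \<subseteq> A" "\<forall>w. Q (w 0) = sat UNIV I \<phi> (list_env ps w)"
    using assms unfolding def_pred_def by blast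
  define \<tau> where "\<tau> n = (if n < length ps then Suc n else 0)" for n
  define v where "v n = (if n < length ps then ps ! n else undefined)" for n
  have params: "v n \<in> A" if "1 + n \<in> fv (rename \<tau> \<phi>)" for n
  proof -
    from that have "n < length ps" by (auto simp: fv_rename \<tau>_def split: if_splits)
    then show ?thesis using ps(1) by (auto simp: v_def)
  qed
  have "sat UNIV I (rename \<tau> \<phi>) (list_env xs v) = Q (xs ! 0)" if "length xs = 1" for xs
  proof -
    have "list_env xs v \<circ> \<tau> = list_env ps (\<lambda>_. xs ! 0)"
      by (rule ext) (use that in \<open>auto simp: list_env_def \<tau>_def v_def\<close>)
    then show ?thesis using ps(2)[rule_format, of "\<lambda>_. xs ! 0"] by (simp add: sat_rename)
  qed
  then show ?thesis unfolding definable_rel_def using params by blast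
qed

text \<open>A term is a function of the assignment; it is definable if its graph is, with the
  value in variable 0 and the arguments shifted by one.\<close>

definition def_term :: "'u set \<Rightarrow> ((nat \<Rightarrow> 'u) \<Rightarrow> 'u) \<Rightarrow> bool" where
  "def_term A t \<longleftrightarrow> def_pred A (\<lambda>w. w 0 = t (\<lambda>n. w (Suc n)))"

definition def_fun :: "'u set \<Rightarrow> ('u \<Rightarrow> 'u) \<Rightarrow> bool" where
  "def_fun A g \<longleftrightarrow> def_pred A (\<lambda>w. w 0 = g (w 1))"

definition def_set :: "'u set \<Rightarrow> 'u set \<Rightarrow> bool" where
  "def_set A X \<longleftrightarrow> def_pred A (\<lambda>w. w 0 \<in> X)"

lemma def_term_var: "def_term A (\<lambda>w. w i)"
  unfolding def_term_def by (rule def_pred_eq)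

lemma def_term_param: "a \<in> A \<Longrightarrow> def_term A (\<lambda>w. a)"
  unfolding def_term_def by (rule def_pred_eq_param)

lemma def_term_subst: "def_term A t \<Longrightarrow> def_term A (\<lambda>w. t (w \<circ> \<sigma>))"
  unfolding def_term_def
  by (drule def_pred_subst[where \<sigma>="lift_renaming \<sigma>"]) (simp add: lift_renaming_def comp_def)

lemma def_pred_Ex: "def_pred A (\<lambda>w. Q (w 0) (\<lambda>n. w (Suc n))) \<Longrightarrow> def_pred A (\<lambda>w. \<exists>x. Q x w)"
  by (drule def_pred_ex) (simp add: eta_contract_eq)

lemma def_pred_comp3:
  assumes R: "def_pred A (\<lambda>w. R (w 0) (w 1) (w 2))"
    and t: "def_term A t1" "def_term A t2" "def_term A t3"
  shows "def_pred A (\<lambda>w. R (t1 w) (t2 w) (t3 w))"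
proof -
  define shift where "shift w = (\<lambda>n. w (Suc (Suc (Suc n))))" for w :: "nat \<Rightarrow> 'u"
  have "def_pred A (\<lambda>w. w 2 = t1 (shift w))"
    using def_pred_subst[OF t(1)[unfolded def_term_def], where \<sigma>="\<lambda>n. if n = 0 then 2 else n + 2"]
    by (simp add: shift_def comp_def)
  moreover have "def_pred A (\<lambda>w. w 1 = t2 (shift w))"
    using def_pred_subst[OF t(2)[unfolded def_term_def], where \<sigma>="\<lambda>n. if n = 0 then 1 else n + 2"]
    by (simp add: shift_def comp_def)
  moreover have "def_pred A (\<lambda>w. w 0 = t3 (shift w))"
    using def_pred_subst[OF t(3)[unfolded def_term_def], where \<sigma>="\<lambda>n. if n = 0 then 0 else n + 2"]
    by (simp add: shift_def comp_def)
  moreover have "def_pred A (\<lambda>w. R (w 2) (w 1) (w 0))"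
    using def_pred_subst[OF R, where \<sigma>="\<lambda>n. 2 - n"] by (simp add: numeral_2_eq_2)
  ultimately have "def_pred A (\<lambda>w. w 2 = t1 (shift w) \<and> w 1 = t2 (shift w) \<and> w 0 = t3 (shift w)
      \<and> R (w 2) (w 1) (w 0))"
    by (intro def_pred_conj)
  then have "def_pred A (\<lambda>w. \<exists>x y z. (\<lambda>w. w 2 = t1 (shift w) \<and> w 1 = t2 (shift w)
      \<and> w 0 = t3 (shift w) \<and> R (w 2) (w 1) (w 0)) (cons_env z (cons_env y (cons_env x w))))"
    by (intro def_pred_ex)
  then show ?thesis
    by (rule def_pred_cong) (simp add: shift_def numeral_2_eq_2 eta_contract_eq)
qed

lemma def_pred_comp2:
  "def_pred A (\<lambda>w. R (w 0) (w 1)) \<Longrightarrow> def_term A t1 \<Longrightarrow> def_term A t2 \<Longrightarrow>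
    def_pred A (\<lambda>w. R (t1 w) (t2 w))"
  using def_pred_comp3[where R="\<lambda>x y z. R x y"] by blast

lemma def_pred_comp1: "def_pred A (\<lambda>w. R (w 0)) \<Longrightarrow> def_term A t \<Longrightarrow> def_pred A (\<lambda>w. R (t w))"
  using def_pred_comp3[where R="\<lambda>x y z. R x"] by blast

lemma def_term_comp2:
  assumes "def_pred A (\<lambda>w. w 0 = h (w 1) (w 2))" "def_term A t1" "def_term A t2"
  shows "def_term A (\<lambda>w. h (t1 w) (t2 w))"
  unfolding def_term_def
  using def_pred_comp3[where R="\<lambda>x y z. x = h y z", OF assms(1) def_term_var
      def_term_subst[OF assms(2)] def_term_subst[OF assms(3)]]
  by (simp add: comp_def)

lemma def_term_comp1:
  assumes "def_pred A (\<lambda>w. w 0 = h (w 1))" "def_term A t"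
  shows "def_term A (\<lambda>w. h (t w))"
  unfolding def_term_def
  using def_pred_comp2[where R="\<lambda>x y. x = h y",
      OF assms(1) def_term_var def_term_subst[OF assms(2)]]
  by (simp add: comp_def)

lemma def_pred_less: "def_pred A (\<lambda>w. w 0 < w 1)"
  using def_pred_of_definable_rel_no_params[OF less_definable, of A]
  by (simp add: numeral_2_eq_2 upt_rec)

lemma def_pred_plus: "def_pred A (\<lambda>w. w 0 = w 1 + w 2)"
  using def_pred_subst[OF def_pred_of_definable_rel_no_params[OF plus_definable],
      where \<sigma>="\<lambda>n. if n = 0 then 1 else if n = 1 then 2 else 0"]
  by (simp add: numeral_3_eq_3 numeral_2_eq_2 upt_rec)

lemma def_pred_times: "def_pred A (\<lambda>w. w 0 = w 1 * w 2)"
  using def_pred_subst[OF def_pred_of_definable_rel_no_params[OF times_definable],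
      where \<sigma>="\<lambda>n. if n = 0 then 1 else if n = 1 then 2 else 0"]
  by (simp add: numeral_3_eq_3 numeral_2_eq_2 upt_rec)

lemma def_term_plus: "def_term A t1 \<Longrightarrow> def_term A t2 \<Longrightarrow> def_term A (\<lambda>w. t1 w + t2 w)"
  by (rule def_term_comp2[OF def_pred_plus])

lemma def_term_times: "def_term A t1 \<Longrightarrow> def_term A t2 \<Longrightarrow> def_term A (\<lambda>w. t1 w * t2 w)"
  by (rule def_term_comp2[OF def_pred_times])

lemma def_pred_less_term: "def_term A t1 \<Longrightarrow> def_term A t2 \<Longrightarrow> def_pred A (\<lambda>w. t1 w < t2 w)"
  by (rule def_pred_comp2[OF def_pred_less])

lemma def_pred_eq_term: "def_term A t1 \<Longrightarrow> def_term A t2 \<Longrightarrow> def_pred A (\<lambda>w. t1 w = t2 w)"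
  by (rule def_pred_comp2[where R="(=)", OF def_pred_eq[of A 0 1]])

lemma def_pred_disj: "def_pred A P \<Longrightarrow> def_pred A Q \<Longrightarrow> def_pred A (\<lambda>w. P w \<or> Q w)"
  by (drule def_pred_neg, drule def_pred_neg, drule (1) def_pred_conj, drule def_pred_neg) simp

lemma def_pred_imp: "def_pred A P \<Longrightarrow> def_pred A Q \<Longrightarrow> def_pred A (\<lambda>w. P w \<longrightarrow> Q w)"
  by (drule def_pred_neg, drule (1) def_pred_disj) simp

lemma def_pred_All: "def_pred A (\<lambda>w. Q (w 0) (\<lambda>n. w (Suc n))) \<Longrightarrow> def_pred A (\<lambda>w. \<forall>x. Q x w)"
  by (drule def_pred_neg, drule def_pred_Ex, drule def_pred_neg) simp

lemma def_pred_le_term: "def_term A t1 \<Longrightarrow> def_term A t2 \<Longrightarrow> def_pred A (\<lambda>w. t1 w \<le> t2 w)"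
  using def_pred_disj[OF def_pred_less_term def_pred_eq_term] by (simp add: le_less)

lemma def_term_zero: "def_term A (\<lambda>w. 0)"
  using def_pred_subst[OF def_pred_plus, where \<sigma>="\<lambda>n. 0"]
  unfolding def_term_def by (rule def_pred_cong) simp

lemma def_term_one: "def_term A (\<lambda>w. 1)"
proof -
  have "def_pred A (\<lambda>w. w 0 = w 0 * w 0 \<and> \<not> w 0 = 0)"
    using def_pred_subst[OF def_pred_times, where \<sigma>="\<lambda>n. 0"]
      def_pred_neg[OF def_term_zero[unfolded def_term_def]]
    by (intro def_pred_conj) (simp_all add: comp_def)
  moreover have "(x = x * x \<and> x \<noteq> 0) \<longleftrightarrow> x = 1" for x :: 'u
    by auto
  ultimately show ?thesis unfolding def_term_def by simp
qed

lemma def_term_uminus: "def_term A t \<Longrightarrow> def_term A (\<lambda>w. - t w)"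
proof -
  have "def_pred A (\<lambda>w. w 0 + w 1 = 0)"
    by (intro def_pred_eq_term def_term_plus def_term_var def_term_zero)
  then have "def_pred A (\<lambda>w. w 0 = - w 1)"
    by (rule def_pred_cong) (rule eq_neg_iff_add_eq_0[symmetric])
  then show "def_term A t \<Longrightarrow> def_term A (\<lambda>w. - t w)" by (rule def_term_comp1)
qed

lemma def_term_minus: "def_term A t1 \<Longrightarrow> def_term A t2 \<Longrightarrow> def_term A (\<lambda>w. t1 w - t2 w)"
  using def_term_plus[OF _ def_term_uminus] by (simp only: diff_conv_add_uminus)

lemma def_term_inverse: "def_term A t \<Longrightarrow> def_term A (\<lambda>w. inverse (t w))"
proof -
  have "def_pred A (\<lambda>w. (w 1 = 0 \<and> w 0 = 0) \<or> w 0 * w 1 = 1)"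
    by (intro def_pred_disj def_pred_conj def_pred_eq_term def_term_times def_term_var
        def_term_zero def_term_one)
  then have "def_pred A (\<lambda>w. w 0 = inverse (w 1))"
    by (rule def_pred_cong) (metis inverse_unique left_inverse mult.commute inverse_zero)
  then show "def_term A t \<Longrightarrow> def_term A (\<lambda>w. inverse (t w))" by (rule def_term_comp1)
qed

lemma def_term_divide: "def_term A t1 \<Longrightarrow> def_term A t2 \<Longrightarrow> def_term A (\<lambda>w. t1 w / t2 w)"
  using def_term_times[OF _ def_term_inverse] by (simp only: divide_inverse)

lemma def_term_abs: "def_term A t \<Longrightarrow> def_term A (\<lambda>w. \<bar>t w\<bar>)"
proof -
  have "def_pred A (\<lambda>w. (0 \<le> w 1 \<and> w 0 = w 1) \<or> (w 1 < 0 \<and> w 0 = - w 1))"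
    by (intro def_pred_disj def_pred_conj def_pred_eq_term def_pred_le_term def_pred_less_term
        def_term_uminus def_term_var def_term_zero)
  then have "def_pred A (\<lambda>w. w 0 = \<bar>w 1\<bar>)" by (rule def_pred_cong) auto
  then show "def_term A t \<Longrightarrow> def_term A (\<lambda>w. \<bar>t w\<bar>)" by (rule def_term_comp1)
qed

lemma def_term_app: "def_fun A g \<Longrightarrow> def_term A t \<Longrightarrow> def_term A (\<lambda>w. g (t w))"
  unfolding def_fun_def by (rule def_term_comp1)

lemma def_pred_mem: "def_set A X \<Longrightarrow> def_term A t \<Longrightarrow> def_pred A (\<lambda>w. t w \<in> X)"
  unfolding def_set_def by (rule def_pred_comp1)

lemmas def_pred_intros = def_pred_conj def_pred_disj def_pred_imp def_pred_neg def_pred_Ex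
  def_pred_All
  def_pred_less_term def_pred_le_term def_pred_eq_term def_pred_mem

text \<open>\<open>def_term_app\<close> is not an introduction rule here: its conclusion unifies with every
  term, so it is always supplied together with the definability of its function.\<close>

lemmas def_term_intros = def_term_var def_term_param def_term_zero def_term_one def_term_plus
  def_term_minus def_term_times def_term_uminus def_term_divide def_term_abs def_term_inverse

lemma def_fun_iff_def_term: "def_fun A g \<longleftrightarrow> def_term A (\<lambda>w. g (w 0))"
  unfolding def_fun_def def_term_def by simp

lemma def_fun_of_definable_fun:
  assumes "definable_fun UNIV I A g" "A \<noteq> {}"
  shows "def_fun A g"
  using def_pred_subst[OF def_pred_of_definable_rel[OF assms(1)[unfolded definable_fun_def,
        THEN conjunct2] assms(2)], where \<sigma>="\<lambda>n. if n = 0 then 1 else 0"]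
  unfolding def_fun_def by (simp add: numeral_2_eq_2 upt_rec)

lemma def_fun_uminus: "def_fun A g \<Longrightarrow> def_fun A (\<lambda>x. - g x)"
  unfolding def_fun_iff_def_term by (intro def_term_intros) (simp add: def_fun_iff_def_term)

lemma def_fun_reflect: "def_fun A g \<Longrightarrow> def_fun A (\<lambda>x. g (- x))"
  using def_term_app[OF _ def_term_uminus[OF def_term_var[of A 0]]]
    by (simp add: def_fun_iff_def_term)

lemma def_fun_minus_linear: "def_fun A g \<Longrightarrow> c \<in> A \<Longrightarrow> def_fun A (\<lambda>x. g x - c * x)"
  unfolding def_fun_iff_def_term by (intro def_term_intros) (simp add: def_fun_iff_def_term)

lemma def_fun_mono: "def_fun A g \<Longrightarrow> A \<subseteq> B \<Longrightarrow> def_fun B g"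
  unfolding def_fun_def by (rule def_pred_mono)

lemma def_set_mono: "def_set A X \<Longrightarrow> A \<subseteq> B \<Longrightarrow> def_set B X"
  unfolding def_set_def by (rule def_pred_mono)

lemma def_set_Collect: "def_pred A (\<lambda>w. P (w 0)) \<Longrightarrow> def_set A {x. P x}"
  unfolding def_set_def by simp

lemma def_set_Int: "def_set A X \<Longrightarrow> def_set A Y \<Longrightarrow> def_set A (X \<inter> Y)"
  unfolding def_set_def by (drule (1) def_pred_conj) simp

lemma def_set_Diff: "def_set A X \<Longrightarrow> def_set A Y \<Longrightarrow> def_set A (X - Y)"
  unfolding def_set_def by (drule def_pred_neg[of A "\<lambda>w. w 0 \<in> Y"], drule (1) def_pred_conj) simp

lemma def_set_greaterThanLessThan: "p \<in> A \<Longrightarrow> q \<in> A \<Longrightarrow> def_set A {p<..<q}"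
proof -
  assume "p \<in> A" "q \<in> A"
  then have "def_set A {x. p < x \<and> x < q}"
    by (intro def_set_Collect def_pred_intros def_term_intros)
  then show ?thesis
    by (simp add: greaterThanLessThan_def greaterThan_def lessThan_def Collect_conj_eq)
qed

lemma def_term_of_dcl: "y \<in> dcl I A \<Longrightarrow> A \<noteq> {} \<Longrightarrow> def_term A (\<lambda>w. y)"
  unfolding dcl_def def_term_def using def_pred_of_definable_rel[of A 1 "\<lambda>xs. xs ! 0 = y"] by simp

lemma dcl_of_def_term: "def_term A (\<lambda>w. y) \<Longrightarrow> y \<in> dcl I A"
  unfolding dcl_def def_term_def using definable_rel_of_def_pred[of A "\<lambda>x. x = y"] by simp

lemma dcl_inverse: "y \<in> dcl I A \<Longrightarrow> A \<noteq> {} \<Longrightarrow> inverse y \<in> dcl I A"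
  by (rule dcl_of_def_term, rule def_term_inverse, rule def_term_of_dcl)

end

section \<open>Suprema, neighbourhoods and limits in an ordered field\<close>

definition is_lub :: "'a::linorder set \<Rightarrow> 'a \<Rightarrow> bool" where
  "is_lub X s \<longleftrightarrow> (\<forall>x\<in>X. x \<le> s) \<and> (\<forall>u. (\<forall>x\<in>X. x \<le> u) \<longrightarrow> s \<le> u)"

definition is_glb :: "'a::linorder set \<Rightarrow> 'a \<Rightarrow> bool" where
  "is_glb X s \<longleftrightarrow> (\<forall>x\<in>X. s \<le> x) \<and> (\<forall>u. (\<forall>x\<in>X. u \<le> x) \<longrightarrow> u \<le> s)"

lemma is_lub_upper: "is_lub X s \<Longrightarrow> x \<in> X \<Longrightarrow> x \<le> s"
  unfolding is_lub_def by blast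

lemma is_lub_least: "is_lub X s \<Longrightarrow> (\<And>x. x \<in> X \<Longrightarrow> x \<le> u) \<Longrightarrow> s \<le> u"
  unfolding is_lub_def by blast

lemma is_lub_approx: "is_lub X s \<Longrightarrow> u < (s :: 'a::linorder) \<Longrightarrow> \<exists>x\<in>X. u < x"
  unfolding is_lub_def by (meson not_le)

lemma is_lubI: "(\<And>x. x \<in> X \<Longrightarrow> x \<le> s) \<Longrightarrow> (\<And>u. u < s \<Longrightarrow> \<exists>x\<in>X. u < x) \<Longrightarrow> is_lub X (s :: 'a::linorder)"
  unfolding is_lub_def by (meson leD leI)

lemma is_lub_unique: "is_lub X s \<Longrightarrow> is_lub X t \<Longrightarrow> s = t"
  unfolding is_lub_def by (meson order.antisym)

lemma is_lub_Un: "is_lub J s \<Longrightarrow> is_lub K t \<Longrightarrow> is_lub (J \<union> K) (max s t)"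
  unfolding is_lub_def by (auto simp: max_def)

lemma is_glb_lower: "is_glb X s \<Longrightarrow> x \<in> X \<Longrightarrow> s \<le> x"
  unfolding is_glb_def by blast

lemma is_glb_approx: "is_glb X s \<Longrightarrow> s < (u :: 'a::linorder) \<Longrightarrow> \<exists>x\<in>X. x < u"
  unfolding is_glb_def by (meson not_le)

lemma is_glb_uminus: "is_lub (uminus ` X) s \<Longrightarrow> is_glb X (- s :: 'a::linordered_ab_group_add)"
  unfolding is_glb_def
proof (intro conjI ballI allI impI)
  assume s: "is_lub (uminus ` X) s"
  show "- s \<le> x" if "x \<in> X" for x
    using is_lub_upper[OF s] that by (force simp: minus_le_iff)
  show "u \<le> - s" if "\<forall>x\<in>X. u \<le> x" for u
    using is_lub_least[OF s, of "- u"] that by (force simp: le_minus_iff)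
qed

text \<open>The carrier is only an ordered field, without a topology: neighbourhood filters are
  generated by intervals.\<close>

definition at_right_of :: "'a::linordered_field \<Rightarrow> 'a filter" where
  "at_right_of x = (INF d\<in>{0<..}. principal {x<..<x + d})"

definition nhds_of :: "'a::linordered_field \<Rightarrow> 'a filter" where
  "nhds_of x = (INF d\<in>{0<..}. principal {y. \<bar>y - x\<bar> < d})"

lemma eventually_at_right_of:
  "eventually P (at_right_of x) \<longleftrightarrow> (\<exists>d>0. \<forall>y. x < y \<and> y < x + d \<longrightarrow> P y)"
proof -
  have "\<exists>c\<in>{0<..}. principal {x<..<x + c} \<le> inf (principal {x<..<x + a}) (principal {x<..<x + b})"
    if "a \<in> {0<..}" "b \<in> {0<..}" for a b :: 'a
    using that by (intro bexI[of _ "min a b"]) auto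
  then have "eventually P (at_right_of x) \<longleftrightarrow> (\<exists>d\<in>{0<..}. eventually P (principal {x<..<x + d}))"
    unfolding at_right_of_def by (intro eventually_INF_base) (auto intro: exI[of _ 1])
  then show ?thesis
    by (auto simp: eventually_principal) (metis greaterThan_iff greaterThanLessThan_iff)
qed

lemma eventually_nhds_of:
  "eventually P (nhds_of x) \<longleftrightarrow> (\<exists>d>0. \<forall>y. \<bar>y - x\<bar> < d \<longrightarrow> P y)"
proof -
  have "\<exists>c\<in>{0<..}. principal {y. \<bar>y - x\<bar> < c} \<le>
      inf (principal {y. \<bar>y - x\<bar> < a}) (principal {y. \<bar>y - x\<bar> < b})"
    if "a \<in> {0<..}" "b \<in> {0<..}" for a b :: 'a
    using that by (intro bexI[of _ "min a b"]) auto
  then have "eventually P (nhds_of x) \<longleftrightarrow> (\<exists>d\<in>{0<..}. eventually P (principal {y. \<bar>y - x\<bar> < d}))"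
    unfolding nhds_of_def by (intro eventually_INF_base) (auto intro: exI[of _ 1])
  then show ?thesis by (auto simp: eventually_principal)
qed

lemma at_right_of_neq_bot: "at_right_of x \<noteq> bot"
proof
  assume "at_right_of x = bot"
  then obtain d :: 'a where "d > 0" "\<forall>y. x < y \<and> y < x + d \<longrightarrow> False"
    using eventually_at_right_of[of "\<lambda>_. False" x] by auto
  moreover have "x < x + d / 2" "x + d / 2 < x + d" using \<open>d > 0\<close> by simp_all
  ultimately show False by blast
qed

definition tends_to :: "('b \<Rightarrow> 'a::linordered_field) \<Rightarrow> 'a \<Rightarrow> 'b filter \<Rightarrow> bool" where
  "tends_to q L F \<longleftrightarrow> (\<forall>e>0. eventually (\<lambda>h. \<bar>q h - L\<bar> < e) F)"

lemma tends_to_unique: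
  assumes "F \<noteq> bot" "tends_to q L1 F" "tends_to q L2 F"
  shows "L1 = L2"
proof (rule ccontr)
  assume "L1 \<noteq> L2"
  then have "\<bar>L1 - L2\<bar> / 2 > 0" by simp
  then have "eventually (\<lambda>h. \<bar>q h - L1\<bar> < \<bar>L1 - L2\<bar> / 2) F"
    "eventually (\<lambda>h. \<bar>q h - L2\<bar> < \<bar>L1 - L2\<bar> / 2) F"
    using assms(2,3) unfolding tends_to_def by blast+
  then obtain h where "\<bar>q h - L1\<bar> < \<bar>L1 - L2\<bar> / 2" "\<bar>q h - L2\<bar> < \<bar>L1 - L2\<bar> / 2"
    using eventually_happens'[OF assms(1) eventually_conj] by blast
  then show False by (simp add: abs_less_iff abs_if split: if_splits)
qed

lemma eventually_at_right_ofI: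
  "d > 0 \<Longrightarrow> (\<And>y. x < y \<Longrightarrow> y < x + d \<Longrightarrow> P y) \<Longrightarrow> eventually P (at_right_of x)"
  unfolding eventually_at_right_of by blast

lemma eventually_at_right_of_shift:
  "eventually P (at_right_of x) \<longleftrightarrow> eventually (\<lambda>h. P (x + h)) (at_right_of 0)"
proof -
  have "(\<forall>y. x < y \<and> y < x + d \<longrightarrow> P y) \<longleftrightarrow> (\<forall>h. 0 < h \<and> h < 0 + d \<longrightarrow> P (x + h))" for d
  proof
    assume H: "\<forall>h. 0 < h \<and> h < 0 + d \<longrightarrow> P (x + h)"
    show "\<forall>y. x < y \<and> y < x + d \<longrightarrow> P y"
    proof (intro allI impI)
      fix y assume "x < y \<and> y < x + d"
      then show "P y" using H[rule_format, of "y - x"] by simp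
    qed
  qed auto
  then show ?thesis unfolding eventually_at_right_of by simp
qed

lemma eventually_nhds_of_self: "eventually P (nhds_of x) \<Longrightarrow> P x"
  unfolding eventually_nhds_of by auto

lemma eventually_nhds_of_greaterThanLessThan:
  assumes "x \<in> {p<..<q}" shows "eventually (\<lambda>y. y \<in> {p<..<q}) (nhds_of x)"
  unfolding eventually_nhds_of using assms
  by (intro exI[of _ "min (x - p) (q - x)"]) (auto simp: abs_less_iff)

lemma eventually_nhds_of_from_sides:
  assumes "P x" "eventually P (at_right_of x)" "eventually (\<lambda>y. P (- y)) (at_right_of (- x))"
  shows "eventually P (nhds_of x)"
proof -
  obtain d1 where "d1 > 0" and d1: "\<And>y. x < y \<Longrightarrow> y < x + d1 \<Longrightarrow> P y"
    using assms(2) unfolding eventually_at_right_of by blast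
  obtain d2 where "d2 > 0" and d2: "\<And>y. - x < y \<Longrightarrow> y < - x + d2 \<Longrightarrow> P (- y)"
    using assms(3) unfolding eventually_at_right_of by blast
  have "P y" if "\<bar>y - x\<bar> < min d1 d2" for y
  proof (cases y x rule: linorder_cases)
    case less
    then show ?thesis using d2[of "- y"] that by (simp add: abs_less_iff)
  next
    case greater
    then show ?thesis using d1[of y] that by (simp add: abs_less_iff)
  qed (use assms(1) in simp)
  then show ?thesis unfolding eventually_nhds_of using \<open>d1 > 0\<close> \<open>d2 > 0\<close>
    by (intro exI[of _ "min d1 d2"]) simp
qed

definition cont_at :: "('a::linordered_field \<Rightarrow> 'a) \<Rightarrow> 'a \<Rightarrow> bool" where
  "cont_at g x \<longleftrightarrow> tends_to g (g x) (nhds_of x)"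

lemma cont_at_iff: "cont_at g x \<longleftrightarrow> (\<forall>e>0. \<exists>d>0. \<forall>y. \<bar>y - x\<bar> < d \<longrightarrow> \<bar>g y - g x\<bar> < e)"
  unfolding cont_at_def tends_to_def eventually_nhds_of ..

lemma cont_at_left_closed:
  assumes "x < t" "cont_at g t" "\<And>u. x \<le> u \<Longrightarrow> u < t \<Longrightarrow> c \<le> g u"
  shows "c \<le> g t"
proof (rule ccontr)
  assume "\<not> c \<le> g t"
  then obtain d where "d > 0" and d: "\<And>y. \<bar>y - t\<bar> < d \<Longrightarrow> \<bar>g y - g t\<bar> < c - g t"
    using assms(2) unfolding cont_at_iff by (meson diff_gt_0_iff_gt not_le)
  define u where "u = max x (t - d / 2)"
  have "x \<le> u" "u < t" "\<bar>u - t\<bar> < d" using assms(1) \<open>d > 0\<close> unfolding u_def by (auto simp: abs_if)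
  then show False using assms(3) d by (fastforce simp: abs_less_iff)
qed

lemma cont_at_minus_linear:
  assumes "cont_at g t" shows "cont_at (\<lambda>u. g u - M * u) t"
  unfolding cont_at_iff
proof (intro allI impI)
  fix e :: 'a assume "e > 0"
  then obtain d where "d > 0" and d: "\<And>y. \<bar>y - t\<bar> < d \<Longrightarrow> \<bar>g y - g t\<bar> < e / 2"
    using assms unfolding cont_at_iff by (meson half_gt_zero)
  define d' where "d' = min d (e / (2 * (\<bar>M\<bar> + 1)))"
  have "\<bar>(g y - M * y) - (g t - M * t)\<bar> < e" if y: "\<bar>y - t\<bar> < d'" for y
  proof -
    have "\<bar>M * (y - t)\<bar> \<le> (\<bar>M\<bar> + 1) * \<bar>y - t\<bar>" by (simp add: abs_mult mult_right_mono)
    also have "\<dots> \<le> (\<bar>M\<bar> + 1) * (e / (2 * (\<bar>M\<bar> + 1)))"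
      using y unfolding d'_def by (intro mult_left_mono) auto
    also have "\<dots> = e / 2" by (simp add: field_simps add_pos_nonneg)
    finally have "\<bar>M * (y - t)\<bar> \<le> e / 2" .
    moreover have "\<bar>g y - g t\<bar> < e / 2" using y d unfolding d'_def by simp
    moreover have eq: "(g y - M * y) - (g t - M * t) = (g y - g t) - M * (y - t)"
      by (simp add: algebra_simps)
    ultimately show ?thesis unfolding eq using abs_triangle_ineq4[of "g y - g t" "M * (y - t)"]
      by linarith
  qed
  moreover have "d' > 0" using \<open>d > 0\<close> \<open>e > 0\<close> unfolding d'_def by (simp add: add_pos_nonneg)
  ultimately show "\<exists>d>0. \<forall>y. \<bar>y - t\<bar> < d \<longrightarrow> \<bar>(g y - M * y) - (g t - M * t)\<bar> < e" by blast
qed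

lemma tends_to_if_eventually_not_above_below:
  fixes q :: "'b \<Rightarrow> 'a::linordered_field"
  assumes "eventually (\<lambda>h. \<not> c < q h) F" "eventually (\<lambda>h. \<not> q h < c) F"
  shows "tends_to q c F"
  unfolding tends_to_def
proof (intro allI impI)
  fix e :: 'a assume "e > 0"
  show "eventually (\<lambda>h. \<bar>q h - c\<bar> < e) F"
    using eventually_conj[OF assms]
      by (rule eventually_mono) (use \<open>e > 0\<close> in \<open>auto dest: order.antisym simp: not_less\<close>)
qed

lemma tends_to_lub_of_eventual_lower_bounds:
  fixes q :: "'b \<Rightarrow> 'a::linordered_field"
  assumes dich: "\<And>c. eventually (\<lambda>h. c < q h) F \<or> eventually (\<lambda>h. q h < c) F"
    and s: "is_lub {c. eventually (\<lambda>h. c < q h) F} s"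
  shows "tends_to q s F"
  unfolding tends_to_def
proof (intro allI impI)
  fix e :: 'a assume "e > 0"
  have "\<not> eventually (\<lambda>h. s + e < q h) F"
    using is_lub_upper[OF s, of "s + e"] \<open>e > 0\<close> by auto
  then have "eventually (\<lambda>h. q h < s + e) F" using dich by blast
  moreover obtain c where "s - e < c" "eventually (\<lambda>h. c < q h) F"
    using is_lub_approx[OF s, of "s - e"] \<open>e > 0\<close> by auto
  ultimately show "eventually (\<lambda>h. \<bar>q h - s\<bar> < e) F"
    by (auto elim: eventually_elim2 simp: abs_less_iff)
qed

section \<open>Germs, intervals and boundaries\<close>

definition germ_decided :: "'a filter \<Rightarrow> 'a set \<Rightarrow> bool" where
  "germ_decided F X \<longleftrightarrow> eventually (\<lambda>y. y \<in> X) F \<or> eventually (\<lambda>y. y \<notin> X) F"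

lemma germ_decided_Un:
  assumes "germ_decided F J" "germ_decided F K" shows "germ_decided F (J \<union> K)"
proof (cases "eventually (\<lambda>y. y \<notin> J) F \<and> eventually (\<lambda>y. y \<notin> K) F")
  case True
  then have "eventually (\<lambda>y. y \<notin> J \<and> y \<notin> K) F" by (intro eventually_conj) auto
  then have "eventually (\<lambda>y. y \<notin> J \<union> K) F" by simp
  then show ?thesis unfolding germ_decided_def ..
next
  case False
  then have "eventually (\<lambda>y. y \<in> J) F \<or> eventually (\<lambda>y. y \<in> K) F"
    using assms unfolding germ_decided_def by blast
  then have "eventually (\<lambda>y. y \<in> J \<union> K) F" by (auto elim: eventually_mono)
  then show ?thesis unfolding germ_decided_def ..
qed

lemma germ_decided_Int:
  assumes "germ_decided F J" "germ_decided F K" shows "germ_decided F (J \<inter> K)"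
proof (cases "eventually (\<lambda>y. y \<in> J) F \<and> eventually (\<lambda>y. y \<in> K) F")
  case True
  then have "eventually (\<lambda>y. y \<in> J \<and> y \<in> K) F" by (intro eventually_conj) auto
  then have "eventually (\<lambda>y. y \<in> J \<inter> K) F" by simp
  then show ?thesis unfolding germ_decided_def ..
next
  case False
  then have "eventually (\<lambda>y. y \<notin> J) F \<or> eventually (\<lambda>y. y \<notin> K) F"
    using assms unfolding germ_decided_def by blast
  then have "eventually (\<lambda>y. y \<notin> J \<inter> K) F" by (auto elim: eventually_mono)
  then show ?thesis unfolding germ_decided_def ..
qed

lemma germ_decided_Union: "finite G \<Longrightarrow> (\<And>J. J \<in> G \<Longrightarrow> germ_decided F J) \<Longrightarrow> germ_decided F (\<Union>G)"
  by (induction G rule: finite_induct) (simp_all add: germ_decided_def[of F "{}"] germ_decided_Un)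

lemma germ_decided_at_right_greaterThan: "germ_decided (at_right_of x) {y. a < y}"
proof (cases "a \<le> x")
  case True
  then have "eventually (\<lambda>y. y \<in> {y. a < y}) (at_right_of x)"
    by (intro eventually_at_right_ofI[of 1]) auto
  then show ?thesis unfolding germ_decided_def ..
next
  case False
  then have "eventually (\<lambda>y. y \<notin> {y. a < y}) (at_right_of x)"
    by (intro eventually_at_right_ofI[of "a - x"]) auto
  then show ?thesis unfolding germ_decided_def ..
qed

lemma germ_decided_at_right_lessThan: "germ_decided (at_right_of x) {y. y < c}"
proof (cases "x < c")
  case True
  then have "eventually (\<lambda>y. y \<in> {y. y < c}) (at_right_of x)"
    by (intro eventually_at_right_ofI[of "c - x"]) auto
  then show ?thesis unfolding germ_decided_def ..
next
  case False
  then have "eventually (\<lambda>y. y \<notin> {y. y < c}) (at_right_of x)"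
    by (intro eventually_at_right_ofI[of 1]) auto
  then show ?thesis unfolding germ_decided_def ..
qed

lemma germ_decided_at_right_singleton: "germ_decided (at_right_of x) {a}"
proof -
  have "eventually (\<lambda>y. y \<notin> {a}) (at_right_of x)"
  proof (cases "a \<le> x")
    case True
    then show ?thesis by (intro eventually_at_right_ofI[of 1]) auto
  next
    case False
    then show ?thesis by (intro eventually_at_right_ofI[of "a - x"]) auto
  qed
  then show ?thesis unfolding germ_decided_def ..
qed

lemma germ_decided_at_right_basic_interval:
  assumes "basic_interval UNIV J" shows "germ_decided (at_right_of x) J"
proof -
  have "{y \<in> UNIV. a < y \<and> y < c} = {y. a < y} \<inter> {y. y < c}" for a c :: 'a
    by auto
  moreover have "germ_decided F UNIV" for F :: "'a filter"
    unfolding germ_decided_def by simp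
  ultimately show ?thesis using assms unfolding basic_interval_def
    by (auto intro: germ_decided_Int germ_decided_at_right_singleton
        germ_decided_at_right_greaterThan
        germ_decided_at_right_lessThan)
qed

lemma basic_interval_infinite:
  assumes "basic_interval UNIV (J :: 'a::linordered_field set)" "infinite J"
  shows "\<exists>p q. p < q \<and> {p<..<q} \<subseteq> J"
  using assms unfolding basic_interval_def
proof (elim disjE bexE)
  fix a c assume J: "J = {y \<in> UNIV. a < y \<and> y < c}" "infinite J"
  have "a < c"
  proof (rule ccontr)
    assume "\<not> a < c"
    then have "J = {}" using J(1) by auto
    then show False using J(2) by simp
  qed
  then show ?thesis using J(1) by (intro exI[of _ a] exI[of _ c]) auto
next
  fix a assume "J = {y \<in> UNIV. a < y}"
  then show ?thesis by (intro exI[of _ a] exI[of _ "a + 1"]) auto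
next
  fix c assume "J = {y \<in> UNIV. y < c}"
  then show ?thesis by (intro exI[of _ "c - 1"] exI[of _ c]) auto
next
  assume "J = UNIV"
  then show ?thesis by (intro exI[of _ 0] exI[of _ 1]) auto
qed auto

lemma basic_interval_has_lub:
  assumes "basic_interval UNIV (J :: 'a::linordered_field set)" "J \<noteq> {}" "bdd_above J"
  shows "\<exists>s. is_lub J s"
  using assms unfolding basic_interval_def
proof (elim disjE bexE)
  fix a c assume J: "J = {y \<in> UNIV. a < y \<and> y < c}" "J \<noteq> {}"
  have "\<exists>x\<in>J. u < x" if "u < c" for u
    using J that by (intro bexI[of _ "(max a u + c) / 2"]) (auto simp: field_simps)
  then show ?thesis using J(1) by (intro exI[of _ c]) (auto intro: is_lubI)
next
  fix c assume J: "J = {y \<in> UNIV. y < c}"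
  have "\<exists>x\<in>J. u < x" if "u < c" for u
    using J that by (intro bexI[of _ "(u + c) / 2"]) (auto simp: field_simps)
  then show ?thesis using J by (intro exI[of _ c]) (auto intro: is_lubI)
next
  fix a assume "J = {y \<in> UNIV. a < y}" "bdd_above J"
  then obtain M where "\<forall>y. a < y \<longrightarrow> y \<le> M" by (auto simp: bdd_above_def)
  then have "max a M + 1 \<le> M" by simp
  then show ?thesis by simp
next
  assume "J = UNIV" "bdd_above J"
  then obtain M :: 'a where "\<forall>y. y \<le> M" by (auto simp: bdd_above_def)
  then have "M + 1 \<le> M" by blast
  then show ?thesis by simp
qed (auto intro: is_lubI)

lemma Union_basic_intervals_has_lub:
  "finite G \<Longrightarrow> (\<And>J. J \<in> G \<Longrightarrow> basic_interval UNIV J) \<Longrightarrow> \<Union>G \<noteq> {} \<Longrightarrow> bdd_above (\<Union>G)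
    \<Longrightarrow> \<exists>s. is_lub (\<Union>G) (s :: 'a::linordered_field)"
proof (induction G rule: finite_induct)
  case (insert J G)
  have bdd: "bdd_above J" "bdd_above (\<Union>G)" using insert.prems(3) by (auto intro: bdd_above_mono)
  consider "J = {}" | "\<Union>G = {}" | "J \<noteq> {}" "\<Union>G \<noteq> {}" by blast
  then show ?case
  proof cases
    case 1
    then show ?thesis using insert bdd by simp
  next
    case 2
    then have "\<Union>(insert J G) = J" by (simp only: Union_insert Un_empty_right)
    then show ?thesis using insert bdd basic_interval_has_lub[of J] by simp
  next
    case 3
    then obtain s t where "is_lub J s" "is_lub (\<Union>G) t"
      using insert bdd basic_interval_has_lub[of J] by blast
    then show ?thesis using is_lub_Un by fastforce
  qed
qed simp

definition boundary :: "'a::linordered_field set \<Rightarrow> 'a set" where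
  "boundary X = {x. (\<exists>\<^sub>F y in nhds_of x. y \<in> X) \<and> (\<exists>\<^sub>F y in nhds_of x. y \<notin> X)}"

lemma eventually_mem_if_not_boundary:
  assumes "x \<in> X" "x \<notin> boundary X" shows "eventually (\<lambda>y. y \<in> X) (nhds_of x)"
  using assms eventually_nhds_of_self[of "\<lambda>y. y \<notin> X" x]
  unfolding boundary_def frequently_def by auto

lemma boundary_disjoint_homogeneous_interval:
  assumes "{p<..<q} \<subseteq> X \<or> {p<..<q} \<inter> X = {}"
  shows "boundary X \<inter> {p<..<q} = {}"
proof -
  have "x \<notin> boundary X" if "x \<in> {p<..<q}" for x
  proof -
    note near = eventually_nhds_of_greaterThanLessThan[OF that]
    from assms have "eventually (\<lambda>y. y \<in> X) (nhds_of x) \<or> eventually (\<lambda>y. y \<notin> X) (nhds_of x)"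
    proof
      assume "{p<..<q} \<subseteq> X"
      then show ?thesis by (intro disjI1 eventually_mono[OF near]) blast
    next
      assume "{p<..<q} \<inter> X = {}"
      then show ?thesis by (intro disjI2 eventually_mono[OF near]) blast
    qed
    then show ?thesis unfolding boundary_def frequently_def by auto
  qed
  then show ?thesis by blast
qed

lemma is_glb_of_complement_in_boundary:
  fixes X :: "'a::linordered_field set"
  assumes "b \<in> X" and c: "is_glb {y. b \<le> y \<and> y \<notin> X} c"
  shows "c \<in> boundary X"
proof -
  have "b \<le> c" using c unfolding is_glb_def by auto
  have below: "y \<in> X" if "b \<le> y" "y < c" for y
    using is_glb_lower[OF c, of y] that by (auto simp: not_le[symmetric])
  have "\<exists>y. \<bar>y - c\<bar> < d \<and> y \<in> X" if "d > 0" for d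
  proof (cases "c = b")
    case False
    then have "b < c" using \<open>b \<le> c\<close> by simp
    define y where "y = max b (c - d / 2)"
    have "b \<le> y" "y < c" "\<bar>y - c\<bar> < d" using \<open>b < c\<close> \<open>d > 0\<close> unfolding y_def by (auto simp: abs_if)
    then show ?thesis using below by blast
  qed (use \<open>b \<in> X\<close> \<open>d > 0\<close> in \<open>intro exI[of _ b], simp\<close>)
  moreover have "\<exists>z. \<bar>z - c\<bar> < d \<and> z \<notin> X" if "d > 0" for d
  proof -
    obtain z where "b \<le> z" "z \<notin> X" "z < c + d" using is_glb_approx[OF c, of "c + d"] \<open>d > 0\<close> by auto
    moreover have "c \<le> z" using is_glb_lower[OF c] calculation(1,2) by blast
    ultimately show ?thesis by (intro exI[of _ z]) auto
  qed
  ultimately show ?thesis unfolding boundary_def frequently_def eventually_nhds_of by blast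
qed

section \<open>One-sided derivatives\<close>

definition diff_quot :: "('a::linordered_field \<Rightarrow> 'a) \<Rightarrow> 'a \<Rightarrow> 'a \<Rightarrow> 'a" where
  "diff_quot g x h = (g (x + h) - g x) / h"

definition has_right_deriv :: "('a::linordered_field \<Rightarrow> 'a) \<Rightarrow> 'a \<Rightarrow> 'a \<Rightarrow> bool" where
  "has_right_deriv g x L \<longleftrightarrow> tends_to (diff_quot g x) L (at_right_of 0)"

definition right_deriv :: "('a::linordered_field \<Rightarrow> 'a) \<Rightarrow> 'a \<Rightarrow> 'a" where
  "right_deriv g x = (if \<exists>L. has_right_deriv g x L then THE L. has_right_deriv g x L else 0)"

definition right_slopes_unbounded :: "('a::linordered_field \<Rightarrow> 'a) \<Rightarrow> 'a \<Rightarrow> bool" where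
  "right_slopes_unbounded g x \<longleftrightarrow> (\<forall>M. eventually (\<lambda>h. M < diff_quot g x h) (at_right_of 0))"

lemma right_deriv_eq:
  assumes "has_right_deriv g x L" shows "right_deriv g x = L"
proof -
  have "(THE L. has_right_deriv g x L) = L"
    using assms tends_to_unique[OF at_right_of_neq_bot] unfolding has_right_deriv_def
    by (intro the_equality) blast+
  then show ?thesis using assms unfolding right_deriv_def by auto
qed

lemma diff_quot_uminus: "diff_quot (\<lambda>y. - g y) x h = - diff_quot g x h"
  unfolding diff_quot_def minus_divide_left minus_diff_eq by simp

lemma has_right_deriv_uminus: "has_right_deriv g x L \<Longrightarrow> has_right_deriv (\<lambda>y. - g y) x (- L)"
  unfolding has_right_deriv_def tends_to_def diff_quot_uminus by (simp add: abs_minus_commute)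

lemma right_slopes_unbounded_uminus:
  assumes "\<forall>M. eventually (\<lambda>h. diff_quot g x h < M) (at_right_of 0)"
  shows "right_slopes_unbounded (\<lambda>y. - g y) x"
  unfolding right_slopes_unbounded_def diff_quot_uminus
proof
  fix M show "eventually (\<lambda>h. M < - diff_quot g x h) (at_right_of 0)"
    using assms[rule_format, of "- M"] by (rule eventually_mono) (simp add: minus_less_iff)
qed

lemma eventually_above_line_if_slopes_above:
  assumes "eventually (\<lambda>h. c < diff_quot g t h) (at_right_of 0)"
  shows "eventually (\<lambda>u. g t - c * t \<le> g u - c * u) (at_right_of t)"
proof -
  have "eventually (\<lambda>h. 0 < h) (at_right_of (0::'a))"
    by (rule eventually_at_right_ofI[of 1]) simp_all
  then have "eventually (\<lambda>h. g t - c * t \<le> g (t + h) - c * (t + h)) (at_right_of 0)"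
  proof (rule eventually_elim2[OF _ assms])
    fix h assume "0 < h" "c < diff_quot g t h"
    then have "c * h < g (t + h) - g t" by (simp add: diff_quot_def pos_less_divide_eq)
    then show "g t - c * t \<le> g (t + h) - c * (t + h)" by (simp add: algebra_simps)
  qed
  then show ?thesis by (simp only: eventually_at_right_of_shift[of _ t])
qed

lemma eventually_slopes_above_if_right_deriv:
  assumes "has_right_deriv g t L" "c < L"
  shows "eventually (\<lambda>h. c < diff_quot g t h) (at_right_of 0)"
proof -
  have "eventually (\<lambda>h. \<bar>diff_quot g t h - L\<bar> < L - c) (at_right_of 0)"
    using assms unfolding has_right_deriv_def tends_to_def by simp
  then show ?thesis by (rule eventually_mono) (simp add: abs_less_iff)
qed

lemma has_deriv_at_of_one_sided:
  assumes "has_right_deriv f b D" "has_right_deriv (\<lambda>x. f (- x)) (- b) (- D)"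
  shows "has_deriv_at f b D"
  unfolding has_deriv_at_def
proof (intro allI impI)
  fix e :: 'a assume "e > 0"
  obtain d1 where "d1 > 0" and d1: "\<And>h. 0 < h \<Longrightarrow> h < d1 \<Longrightarrow> \<bar>diff_quot f b h - D\<bar> < e"
    using assms(1) \<open>e > 0\<close> unfolding has_right_deriv_def tends_to_def eventually_at_right_of
      by force
  obtain d2 where "d2 > 0"
    and d2: "\<And>h. 0 < h \<Longrightarrow> h < d2 \<Longrightarrow> \<bar>diff_quot (\<lambda>x. f (- x)) (- b) h + D\<bar> < e"
    using assms(2) \<open>e > 0\<close> unfolding has_right_deriv_def tends_to_def eventually_at_right_of
      by force
  have "\<bar>(f x - f b) / (x - b) - D\<bar> < e" if x: "x \<noteq> b" "\<bar>x - b\<bar> < min d1 d2" for x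
  proof (cases "b < x")
    case True
    then show ?thesis using d1[of "x - b"] x by (simp add: diff_quot_def)
  next
    case False
    then have "\<bar>diff_quot (\<lambda>x. f (- x)) (- b) (b - x) + D\<bar> < e" using d2[of "b - x"] x by simp
    moreover have "diff_quot (\<lambda>x. f (- x)) (- b) (b - x) = - ((f x - f b) / (x - b))"
      unfolding diff_quot_def minus_divide_right minus_diff_eq by simp
    ultimately show ?thesis by (simp add: abs_minus_commute)
  qed
  then show "\<exists>d>0. \<forall>x. x \<noteq> b \<and> \<bar>x - b\<bar> < d \<longrightarrow> \<bar>(f x - f b) / (x - b) - D\<bar> < e"
    using \<open>d1 > 0\<close> \<open>d2 > 0\<close> by (intro exI[of _ "min d1 d2"]) auto
qed

section \<open>O-minimal ordered fields\<close>

locale o_minimal_field = definable_field I for I :: "'r \<Rightarrow> ('u::linordered_field) list \<Rightarrow> bool" +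
  assumes o_minimal: "o_minimal UNIV I"
begin

lemma def_set_decompose:
  assumes "def_set A X"
  obtains G where "finite G" "X = \<Union>G" "\<And>J. J \<in> G \<Longrightarrow> basic_interval UNIV J"
proof -
  have "def_pred UNIV (\<lambda>w. w 0 \<in> X)" using assms def_pred_mono unfolding def_set_def by blast
  then have "definable_rel UNIV I UNIV 1 (\<lambda>xs. xs ! 0 \<in> X)" by (rule definable_rel_of_def_pred)
  then have "definable_set UNIV I UNIV X" by (simp add: definable_set_def)
  then show ?thesis using o_minimal that unfolding o_minimal_def by blast
qed

lemma def_set_germ_decided: "def_set A X \<Longrightarrow> germ_decided (at_right_of x) X"
  by (elim def_set_decompose) (simp add: germ_decided_Union germ_decided_at_right_basic_interval)

lemma def_pred_eventually_right_or_not: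
  assumes "def_pred A (\<lambda>w. P (w 0))"
  shows "eventually P (at_right_of x) \<or> eventually (\<lambda>y. \<not> P y) (at_right_of x)"
  using def_set_germ_decided[OF def_set_Collect[OF assms], of x] unfolding germ_decided_def by simp

lemma def_set_infinite:
  assumes "def_set A X" "infinite X" shows "\<exists>p q. p < q \<and> {p<..<q} \<subseteq> X"
proof -
  obtain G where G: "finite G" "X = \<Union>G" "\<And>J. J \<in> G \<Longrightarrow> basic_interval UNIV J"
    using def_set_decompose[OF assms(1)] by blast
  then obtain J where "J \<in> G" "infinite J" using assms(2) by auto
  then show ?thesis using basic_interval_infinite[of J] G by blast
qed

lemma def_set_has_lub: "def_set A X \<Longrightarrow> X \<noteq> {} \<Longrightarrow> bdd_above X \<Longrightarrow> \<exists>s. is_lub X s"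
  by (elim def_set_decompose) (simp add: Union_basic_intervals_has_lub)

lemma def_set_uminus: "def_set A X \<Longrightarrow> def_set A (uminus ` X)"
proof -
  assume "def_set A X"
  then have "def_set A {x. - x \<in> X}" by (intro def_set_Collect def_pred_intros def_term_intros)
  moreover have "{x. - x \<in> X} = uminus ` X" by force
  ultimately show ?thesis by simp
qed

lemma def_set_has_glb:
  assumes "def_set A X" "X \<noteq> {}" "bdd_below X" shows "\<exists>s. is_glb X s"
proof -
  have "bdd_above (uminus ` X)" using assms(3) by (simp add: bdd_above_uminus)
  then obtain s where "is_lub (uminus ` X) s"
    using def_set_has_lub[OF def_set_uminus[OF assms(1)]] assms(2) by blast
  then show ?thesis using is_glb_uminus by blast
qed

lemma def_set_boundary: "def_set A X \<Longrightarrow> def_set A (boundary X)"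
proof -
  assume X: "def_set A X"
  have "def_set A {x. \<forall>d. 0 < d \<longrightarrow> (\<exists>y. \<bar>y - x\<bar> < d \<and> y \<in> X) \<and> (\<exists>y. \<bar>y - x\<bar> < d \<and> \<not> y \<in> X)}"
    by (intro def_set_Collect def_pred_intros def_term_intros X)
  moreover have "boundary X = {x. \<forall>d. 0 < d \<longrightarrow>
      (\<exists>y. \<bar>y - x\<bar> < d \<and> y \<in> X) \<and> (\<exists>y. \<bar>y - x\<bar> < d \<and> \<not> y \<in> X)}"
    unfolding boundary_def frequently_def eventually_nhds_of by blast
  ultimately show ?thesis by simp
qed

lemma def_set_homogeneous_subinterval:
  assumes X: "def_set A X" and "p < q"
  shows "\<exists>p' q'. p' < q' \<and> {p'<..<q'} \<subseteq> {p<..<q} \<and> ({p'<..<q'} \<subseteq> X \<or> {p'<..<q'} \<inter> X = {})"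
proof -
  have XU: "def_set UNIV X" using X def_set_mono by blast
  have pq: "def_set UNIV {p<..<q}" by (rule def_set_greaterThanLessThan) auto
  show ?thesis
  proof (cases "finite (X \<inter> {p<..<q})")
    case True
    then have "infinite ({p<..<q} - X \<inter> {p<..<q})"
      using \<open>p < q\<close> by (intro Diff_infinite_finite) simp_all
    moreover have "{p<..<q} - X \<inter> {p<..<q} = {p<..<q} - X" by blast
    ultimately have "infinite ({p<..<q} - X)" by simp
    then show ?thesis using def_set_infinite[OF def_set_Diff[OF pq XU]] by blast
  next
    case False
    then show ?thesis using def_set_infinite[OF def_set_Int[OF XU pq]] by blast
  qed
qed

lemma finite_boundary:
  assumes X: "def_set A X" shows "finite (boundary X)"
proof (rule ccontr)
  assume "infinite (boundary X)"
  then obtain p q where "p < q" "{p<..<q} \<subseteq> boundary X"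
    using def_set_infinite[OF def_set_boundary[OF X]] by blast
  moreover obtain p' q' where "p' < q'" "{p'<..<q'} \<subseteq> {p<..<q}"
    "{p'<..<q'} \<subseteq> X \<or> {p'<..<q'} \<inter> X = {}"
    using def_set_homogeneous_subinterval[OF X \<open>p < q\<close>] by blast
  ultimately have "{p'<..<q'} = {}" using boundary_disjoint_homogeneous_interval[of p' q' X]
    by blast
  then show False using \<open>p' < q'\<close> by simp
qed

lemma def_set_infinite_superlevel:
  fixes s :: "'b \<Rightarrow> 'u"
  assumes "infinite X" and pos: "\<And>x. x \<in> X \<Longrightarrow> 0 < s x" and def: "def_set A (s ` X)"
  shows "\<exists>e>0. infinite {x\<in>X. e < s x}"
proof (cases "finite (s ` X)")
  case True
  have "X = (\<Union>d\<in>s ` X. {x\<in>X. s x = d})" by blast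
  then obtain d where d: "d \<in> s ` X" "infinite {x\<in>X. s x = d}"
    using \<open>infinite X\<close> True finite_UN_I[of "s ` X" "\<lambda>d. {x\<in>X. s x = d}"] by auto
  moreover have "{x\<in>X. s x = d} \<subseteq> {x\<in>X. d / 2 < s x}" using pos by auto
  ultimately have "infinite {x\<in>X. d / 2 < s x}" using finite_subset by blast
  moreover have "0 < d / 2" using d(1) pos by auto
  ultimately show ?thesis by blast
next
  case False
  then obtain y1 y2 where y: "y1 < y2" "{y1<..<y2} \<subseteq> s ` X" using def_set_infinite[OF def] by blast
  define e where "e = (y1 + y2) / 2"
  have e: "y1 < e" "e < y2" using y(1) unfolding e_def by (simp_all add: field_simps)
  have "0 < e"
  proof -
    have "e \<in> s ` X" using y(2) e by auto
    then show ?thesis using pos by auto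
  qed
  have "{e<..<y2} \<subseteq> s ` {x\<in>X. e < s x}"
  proof
    fix d assume d: "d \<in> {e<..<y2}"
    then have "d \<in> s ` X" using y(2) e by auto
    then obtain x where "x \<in> X" "d = s x" by blast
    then show "d \<in> s ` {x\<in>X. e < s x}" using d by auto
  qed
  moreover have "infinite {e<..<y2}" using e(2) by simp
  ultimately have "infinite {x\<in>X. e < s x}" using finite_subset finite_imageI by blast
  then show ?thesis using \<open>0 < e\<close> by blast
qed

lemma positive_def_graph_bounded_below:
  assumes graph: "def_pred UNIV (\<lambda>w. p < w 0 \<and> w 0 < q \<and> w (Suc 0) = s (w 0))"
    and "p < q" and pos: "\<And>x. x \<in> {p<..<q} \<Longrightarrow> 0 < s x"
  shows "\<exists>p' q' e. p' < q' \<and> {p'<..<q'} \<subseteq> {p<..<q} \<and> 0 < e \<and> (\<forall>x\<in>{p'<..<q'}. e < s x)"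
proof -
  have "def_set UNIV {d. \<exists>x. p < x \<and> x < q \<and> d = s x}"
    by (intro def_set_Collect def_pred_Ex graph)
  moreover have "{d. \<exists>x. p < x \<and> x < q \<and> d = s x} = s ` {p<..<q}" by auto
  ultimately have "def_set UNIV (s ` {p<..<q})" by simp
  with pos \<open>p < q\<close> obtain e where e: "0 < e" "infinite {x\<in>{p<..<q}. e < s x}"
    using def_set_infinite_superlevel[of "{p<..<q}" s UNIV] by auto
  have "def_pred UNIV (\<lambda>w. p < w (Suc 0) \<and> w (Suc 0) < q \<and> w 0 = s (w (Suc 0)))"
    using def_pred_subst[OF graph, of "\<lambda>n. if n = 0 then 1 else 0"] by (simp add: comp_def)
  moreover have "def_pred UNIV (\<lambda>w. e < w 0)"
    by (intro def_pred_less_term def_term_var def_term_param) simp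
  ultimately have
    "def_pred UNIV (\<lambda>w. (p < w (Suc 0) \<and> w (Suc 0) < q \<and> w 0 = s (w (Suc 0))) \<and> e < w 0)"
    by (rule def_pred_conj)
  then have "def_set UNIV {x. \<exists>d. (p < x \<and> x < q \<and> d = s x) \<and> e < d}"
    by (intro def_set_Collect def_pred_Ex)
  moreover have "{x. \<exists>d. (p < x \<and> x < q \<and> d = s x) \<and> e < d} = {x\<in>{p<..<q}. e < s x}" by auto
  ultimately have "def_set UNIV {x\<in>{p<..<q}. e < s x}" by simp
  then obtain p' q' where "p' < q'" "{p'<..<q'} \<subseteq> {x\<in>{p<..<q}. e < s x}"
    using def_set_infinite e(2) by blast
  then show ?thesis using e(1) by blast
qed

lemma uniform_on_subinterval:
  assumes P: "def_pred UNIV (\<lambda>w. P (w 0) (w 1))"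
    and mono: "\<And>x e e'. P x e \<Longrightarrow> 0 < e' \<Longrightarrow> e' \<le> e \<Longrightarrow> P x e'"
    and "p < q" and pos: "\<And>x. x \<in> {p<..<q} \<Longrightarrow> \<exists>e>0. P x e"
  shows "\<exists>p' q' e. p' < q' \<and> {p'<..<q'} \<subseteq> {p<..<q} \<and> 0 < e \<and> (\<forall>x\<in>{p'<..<q'}. P x e)"
proof -
  define S where "S x = {e. 0 < e \<and> e \<le> 1 \<and> P x e}" for x
  define s where "s x = (THE d. is_lub (S x) d)" for x
  have s: "is_lub (S x) (s x) \<and> 0 < s x" if x: "x \<in> {p<..<q}" for x
  proof -
    obtain e where "e > 0" "P x e" using pos[OF x] by blast
    then have e: "min e 1 \<in> S x" unfolding S_def using mono[of x e "min e 1"] by auto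
    have "def_set UNIV (S x)"
      unfolding S_def
        by (intro def_set_Collect def_pred_intros def_term_intros def_pred_comp2[OF P]) simp
    moreover have "bdd_above (S x)" unfolding S_def by (auto intro: bdd_aboveI)
    ultimately obtain d where "is_lub (S x) d" using def_set_has_lub e by blast
    then have "is_lub (S x) (s x)" unfolding s_def using is_lub_unique by (metis theI)
    moreover have "0 < min e 1" using \<open>e > 0\<close> by simp
    ultimately show ?thesis using is_lub_upper[OF _ e] by force
  qed
  have lub_graph: "def_pred UNIV (\<lambda>w. p < w 0 \<and> w 0 < q \<and> is_lub (S (w 0)) (w (Suc 0)))"
  proof -
    have "def_pred UNIV (\<lambda>w. p < w 0 \<and> w 0 < q \<and> (\<forall>y. (0 < y \<and> y \<le> 1 \<and> P (w 0) y) \<longrightarrow> y \<le> w (Suc 0))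
        \<and> (\<forall>u. (\<forall>y. (0 < y \<and> y \<le> 1 \<and> P (w 0) y) \<longrightarrow> y \<le> u) \<longrightarrow> w (Suc 0) \<le> u))"
      by (intro def_pred_intros def_term_intros def_pred_comp2[OF P]) simp_all
    then show ?thesis by (rule def_pred_cong) (simp add: is_lub_def S_def)
  qed
  have s_iff: "is_lub (S x) d \<longleftrightarrow> d = s x" if "p < x" "x < q" for x d
    using s[of x] that is_lub_unique by auto
  have "def_pred UNIV (\<lambda>w. p < w 0 \<and> w 0 < q \<and> w (Suc 0) = s (w 0))"
    using s_iff by (intro def_pred_cong[OF lub_graph]) auto
  then obtain p' q' e where pq': "p' < q'" "{p'<..<q'} \<subseteq> {p<..<q}" "0 < e" "\<forall>x\<in>{p'<..<q'}. e < s x"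
    using positive_def_graph_bounded_below \<open>p < q\<close> s by blast
  have "P x e" if x: "x \<in> {p'<..<q'}" for x
  proof -
    have "x \<in> {p<..<q}" "e < s x" using pq' x by auto
    then obtain y where "y \<in> S x" "e < y" using is_lub_approx s by blast
    then show ?thesis using mono[of x y e] \<open>0 < e\<close> unfolding S_def by auto
  qed
  then show ?thesis using pq' by blast
qed

lemma def_pred_interval_induct:
  assumes Q: "def_pred UNIV (\<lambda>w. Q (w 0))" and "x < y" and "Q x"
    and step: "\<And>t. x \<le> t \<Longrightarrow> t < y \<Longrightarrow> (\<forall>u. x \<le> u \<and> u \<le> t \<longrightarrow> Q u) \<Longrightarrow> eventually Q (at_right_of t)"
    and limit: "\<And>t. x < t \<Longrightarrow> t \<le> y \<Longrightarrow> (\<forall>u. x \<le> u \<and> u < t \<longrightarrow> Q u) \<Longrightarrow> Q t"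
  shows "Q y"
proof -
  define S where "S = {t. x \<le> t \<and> t \<le> y \<and> (\<forall>u. x \<le> u \<and> u \<le> t \<longrightarrow> Q u)}"
  have "def_set UNIV S"
    unfolding S_def
      by (intro def_set_Collect def_pred_intros def_term_intros def_pred_comp1[OF Q]) simp_all
  moreover have "x \<in> S" using \<open>Q x\<close> \<open>x < y\<close> unfolding S_def by auto
  moreover have "bdd_above S" unfolding S_def by (auto intro: bdd_aboveI)
  ultimately obtain s where s: "is_lub S s" using def_set_has_lub by blast
  have "x \<le> s" "s \<le> y"
    using is_lub_upper[OF s \<open>x \<in> S\<close>] is_lub_least[OF s, of y] unfolding S_def by auto
  have before: "Q u" if "x \<le> u" "u < s" for u
  proof -
    obtain t where "t \<in> S" "u < t" using is_lub_approx[OF s \<open>u < s\<close>] by blast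
    then show ?thesis using that unfolding S_def by auto
  qed
  have "Q s"
  proof (cases "x = s")
    case False
    then show ?thesis using limit[of s] before \<open>x \<le> s\<close> \<open>s \<le> y\<close> by auto
  qed (use \<open>Q x\<close> in simp)
  then have upto_s: "\<forall>u. x \<le> u \<and> u \<le> s \<longrightarrow> Q u" using before by (auto simp: order_le_less)
  show ?thesis
  proof (cases "s = y")
    case False
    with \<open>s \<le> y\<close> have "s < y" by simp
    then obtain d where "d > 0" and d: "\<And>u. s < u \<Longrightarrow> u < s + d \<Longrightarrow> Q u"
      using step[OF \<open>x \<le> s\<close> _ upto_s] unfolding eventually_at_right_of by blast
    define s' where "s' = min (s + d / 2) y"
    have "s < s'" using \<open>d > 0\<close> \<open>s < y\<close> unfolding s'_def by simp
    have "Q u" if "x \<le> u" "u \<le> s'" for u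
    proof (cases "u \<le> s")
      case False
      then show ?thesis using d[of u] that \<open>d > 0\<close> by (simp add: s'_def)
    qed (use upto_s that in blast)
    then have "s' \<in> S" using \<open>x \<le> s\<close> \<open>s < s'\<close> unfolding S_def s'_def by auto
    then show ?thesis using is_lub_upper[OF s] \<open>s < s'\<close> by (meson not_le)
  qed (use \<open>Q s\<close> in simp)
qed

lemma def_fun_le_by_right_steps:
  assumes g: "def_fun UNIV g" and "x < y"
    and cont: "\<And>t. x < t \<Longrightarrow> t \<le> y \<Longrightarrow> cont_at g t"
    and steps: "\<And>t. x \<le> t \<Longrightarrow> t < y \<Longrightarrow> eventually (\<lambda>u. g t \<le> g u) (at_right_of t)"
  shows "g x \<le> g y"
proof (rule def_pred_interval_induct[where Q="\<lambda>t. g x \<le> g t", OF _ \<open>x < y\<close>])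
  show "def_pred UNIV (\<lambda>w. g x \<le> g (w 0))"
    by (intro def_pred_intros def_term_intros def_term_app[OF g]) simp
next
  fix t assume t: "x \<le> t" "t < y" "\<forall>u. x \<le> u \<and> u \<le> t \<longrightarrow> g x \<le> g u"
  then have "g x \<le> g t" by simp
  then show "eventually (\<lambda>u. g x \<le> g u) (at_right_of t)"
    using steps[OF t(1,2)] by (auto elim: eventually_mono)
next
  fix t assume "x < t" "t \<le> y" "\<forall>u. x \<le> u \<and> u < t \<longrightarrow> g x \<le> g u"
  then show "g x \<le> g t" using cont_at_left_closed[OF \<open>x < t\<close> cont] by blast
qed simp

lemma def_set_eventual_lower_bounds:
  assumes q: "def_fun UNIV q" shows "def_set UNIV {c. eventually (\<lambda>h. c < q h) (at_right_of x)}"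
proof -
  have "def_set UNIV {c. \<exists>d. 0 < d \<and> (\<forall>y. x < y \<and> y < x + d \<longrightarrow> c < q y)}"
    by (intro def_set_Collect def_pred_intros def_term_intros def_term_app[OF q]) simp_all
  then show ?thesis unfolding eventually_at_right_of by simp
qed

lemma def_fun_right_limit_cases:
  assumes q: "def_fun UNIV q"
  shows "(\<forall>M. eventually (\<lambda>h. M < q h) (at_right_of x))
    \<or> (\<forall>M. eventually (\<lambda>h. q h < M) (at_right_of x))
    \<or> (\<exists>L. tends_to q L (at_right_of x))"
proof -
  let ?F = "at_right_of x"
  have germ_above: "eventually (\<lambda>h. c < q h) ?F \<or> eventually (\<lambda>h. \<not> c < q h) ?F" for c
    by (rule def_pred_eventually_right_or_not[of UNIV])
      (intro def_pred_intros def_term_intros def_term_app[OF q]; simp)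
  have germ_below: "eventually (\<lambda>h. q h < c) ?F \<or> eventually (\<lambda>h. \<not> q h < c) ?F" for c
    by (rule def_pred_eventually_right_or_not[of UNIV])
      (intro def_pred_intros def_term_intros def_term_app[OF q]; simp)
  consider c where "\<not> eventually (\<lambda>h. c < q h) ?F" "\<not> eventually (\<lambda>h. q h < c) ?F"
    | "\<forall>c. eventually (\<lambda>h. c < q h) ?F" | "\<forall>c. eventually (\<lambda>h. q h < c) ?F"
    | c0 c1 where "\<forall>c. eventually (\<lambda>h. c < q h) ?F \<or> eventually (\<lambda>h. q h < c) ?F"
        "eventually (\<lambda>h. q h < c0) ?F" "eventually (\<lambda>h. c1 < q h) ?F"
    by blast
  then show ?thesis
  proof cases
    case 1
    then show ?thesis using germ_above germ_below tends_to_if_eventually_not_above_below by blast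
  next
    case (4 c0 c1)
    have "c \<le> c0" if "eventually (\<lambda>h. c < q h) ?F" for c
      using eventually_happens'[OF at_right_of_neq_bot eventually_conj[OF that 4(2)]] by force
    then have "bdd_above {c. eventually (\<lambda>h. c < q h) ?F}" by (intro bdd_aboveI) simp
    then obtain s where "is_lub {c. eventually (\<lambda>h. c < q h) ?F} s"
      using def_set_has_lub[OF def_set_eventual_lower_bounds[OF q]] 4(3) by blast
    then show ?thesis using tends_to_lub_of_eventual_lower_bounds 4(1) by blast
  qed blast+
qed

text \<open>A definable function cannot jump up by a fixed amount at every point of an interval:
  its values there would be infinitely many and pairwise far apart, yet fill an interval.\<close>

lemma def_fun_no_uniform_right_jumps:
  assumes g: "def_fun UNIV g" and "p < q" "e > 0"
  shows "\<not> (\<forall>x\<in>{p<..<q}. \<forall>y. x < y \<and> y < x + e \<longrightarrow> g x + e < g y)"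
proof
  assume jump: "\<forall>x\<in>{p<..<q}. \<forall>y. x < y \<and> y < x + e \<longrightarrow> g x + e < g y"
  define q' where "q' = min q (p + e)"
  have "p < q'" using \<open>p < q\<close> \<open>e > 0\<close> unfolding q'_def by simp
  have far: "g x + e < g y" if "p < x" "x < y" "y < q'" for x y
    using jump that unfolding q'_def by auto
  have "inj_on g {p<..<q'}"
  proof (rule inj_onI)
    fix x y assume "x \<in> {p<..<q'}" "y \<in> {p<..<q'}" "g x = g y"
    then show "x = y" using far[of x y] far[of y x] \<open>e > 0\<close> by (cases x y rule: linorder_cases) auto
  qed
  then have "infinite (g ` {p<..<q'})" using \<open>p < q'\<close> by (simp add: finite_image_iff)
  moreover have "def_set UNIV (g ` {p<..<q'})"
  proof -
    have "def_set UNIV {z. \<exists>x. p < x \<and> x < q' \<and> z = g x}"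
      by (intro def_set_Collect def_pred_intros def_term_intros def_term_app[OF g]) simp_all
    moreover have "{z. \<exists>x. p < x \<and> x < q' \<and> z = g x} = g ` {p<..<q'}" by auto
    ultimately show ?thesis by simp
  qed
  ultimately obtain k1 k2 where "k1 < k2" and k: "{k1<..<k2} \<subseteq> g ` {p<..<q'}"
    using def_set_infinite by blast
  define r where "r = min ((k2 - k1) / 3) (e / 2)"
  have r: "0 < r" "r \<le> (k2 - k1) / 3" "r \<le> e / 2"
    using \<open>k1 < k2\<close> \<open>e > 0\<close> unfolding r_def by (simp_all only: min.cobounded1 min.cobounded2) simp
  then have "k1 + r \<in> g ` {p<..<q'}" "k1 + 2 * r \<in> g ` {p<..<q'}" using k by auto
  then obtain x y where xy: "x \<in> {p<..<q'}" "y \<in> {p<..<q'}" "g x = k1 + r" "g y = k1 + 2 * r"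
    by (metis imageE)
  then show False using far[of x y] far[of y x] r by (cases x y rule: linorder_cases) auto
qed

lemma def_set_cont_at: "def_fun A g \<Longrightarrow> def_set A {x. cont_at g x}"
proof -
  assume g: "def_fun A g"
  have "def_set A {x. \<forall>e. 0 < e \<longrightarrow> (\<exists>d. 0 < d \<and> (\<forall>y. \<bar>y - x\<bar> < d \<longrightarrow> \<bar>g y - g x\<bar> < e))}"
    by (intro def_set_Collect def_pred_intros def_term_intros def_term_app[OF g])
  then show ?thesis by (simp add: cont_at_iff)
qed

lemma def_pred_has_right_deriv:
  "def_fun A g \<Longrightarrow> def_term A t \<Longrightarrow> def_term A r \<Longrightarrow> def_pred A (\<lambda>w. has_right_deriv g (t w) (r w))"
proof -
  assume g: "def_fun A g"
  have "def_pred A (\<lambda>w. \<forall>e. 0 < e \<longrightarrow> (\<exists>d. 0 < d \<and> (\<forall>h. 0 < h \<and> h < 0 + d \<longrightarrow>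
      \<bar>(g (w 0 + h) - g (w 0)) / h - w (Suc 0)\<bar> < e)))"
    by (intro def_pred_intros def_term_intros def_term_app[OF g])
  then have "def_pred A (\<lambda>w. has_right_deriv g (w 0) (w 1))"
    by (simp add: has_right_deriv_def tends_to_def eventually_at_right_of diff_quot_def)
  then show "def_term A t \<Longrightarrow> def_term A r \<Longrightarrow> ?thesis" by (rule def_pred_comp2)
qed

lemma def_set_right_slopes_unbounded: "def_fun A g \<Longrightarrow> def_set A {x. right_slopes_unbounded g x}"
proof -
  assume g: "def_fun A g"
  have "def_set A {x. \<forall>M. \<exists>d. 0 < d \<and> (\<forall>h. 0 < h \<and> h < 0 + d \<longrightarrow> M < (g (x + h) - g x) / h)}"
    by (intro def_set_Collect def_pred_intros def_term_intros def_term_app[OF g])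
  then show ?thesis by (simp add: right_slopes_unbounded_def eventually_at_right_of diff_quot_def)
qed

lemma def_set_has_right_deriv:
  assumes "def_fun A g" shows "def_set A {x. \<exists>L. has_right_deriv g x L}"
  by (intro def_set_Collect def_pred_Ex def_pred_has_right_deriv[OF assms] def_term_var)

lemma def_fun_right_deriv:
  assumes g: "def_fun A g" shows "def_fun A (right_deriv g)"
proof -
  have "def_pred A (\<lambda>w. has_right_deriv g (w 1) (w 0)
      \<or> \<not> (\<exists>L. has_right_deriv g (w (Suc 0)) L) \<and> w 0 = 0)"
    by (intro def_pred_disj def_pred_conj def_pred_neg def_pred_eq_term def_pred_Ex
        def_pred_has_right_deriv[OF g] def_term_var def_term_zero)
  moreover have
    "(has_right_deriv g y z \<or> \<not> (\<exists>L. has_right_deriv g y L) \<and> z = 0) \<longleftrightarrow> z = right_deriv g y"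
    for y z
  proof (cases "\<exists>L. has_right_deriv g y L")
    case True
    then obtain L where "has_right_deriv g y L" ..
    then show ?thesis using right_deriv_eq[of g y] by metis
  qed (simp add: right_deriv_def)
  ultimately show ?thesis unfolding def_fun_def by simp
qed

lemma def_fun_slope_lower_bound:
  assumes g: "def_fun UNIV g" and "x < y"
    and cont: "\<And>t. x < t \<Longrightarrow> t \<le> y \<Longrightarrow> cont_at g t"
    and slopes: "\<And>t. x \<le> t \<Longrightarrow> t < y \<Longrightarrow> eventually (\<lambda>h. c < diff_quot g t h) (at_right_of 0)"
  shows "c * (y - x) \<le> g y - g x"
proof -
  have "g x - c * x \<le> g y - c * y"
    using def_fun_le_by_right_steps[OF def_fun_minus_linear[OF g UNIV_I] \<open>x < y\<close>]
      cont_at_minus_linear[OF cont] eventually_above_line_if_slopes_above[OF slopes] by blast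
  then show ?thesis by (simp add: algebra_simps)
qed

lemma def_fun_diff_quot:
  assumes g: "def_fun A g" and "x \<in> A" shows "def_fun A (diff_quot g x)"
  unfolding def_fun_iff_def_term diff_quot_def
  by (intro def_term_intros def_term_app[OF g] \<open>x \<in> A\<close>)

lemma def_set_slopes_above:
  assumes g: "def_fun A g" and "c \<in> A"
  shows "def_set A {x. eventually (\<lambda>h. c < diff_quot g x h) (at_right_of 0)}"
proof -
  have "def_set A {x. \<exists>d. 0 < d \<and> (\<forall>h. 0 < h \<and> h < 0 + d \<longrightarrow> c < (g (x + h) - g x) / h)}"
    by (intro def_set_Collect def_pred_intros def_term_intros def_term_app[OF g] \<open>c \<in> A\<close>)
  then show ?thesis by (simp add: eventually_at_right_of diff_quot_def)
qed

end

section \<open>Generic points over an elementary substructure\<close>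

locale o_minimal_elementary = o_minimal_field I for I :: "'r \<Rightarrow> ('u::linordered_field) list \<Rightarrow> bool" +
  fixes E :: "'u set"
  assumes elementary: "elementary_sub I E"
begin

lemma E_nonempty: "E \<noteq> {}"
  using elementary unfolding elementary_sub_def by blast

lemma def_set_meets_E:
  assumes X: "def_set E X" and "x0 \<in> X"
  shows "\<exists>x\<in>E. x \<in> X"
proof -
  obtain \<phi> :: "'r fm" and ps where ps: "set ps \<subseteq> E" "\<forall>w. (w 0 \<in> X) = sat UNIV I \<phi> (list_env ps w)"
    using X unfolding def_set_def def_pred_def by blast
  obtain e0 where "e0 \<in> E" using E_nonempty by blast
  define \<tau> where "\<tau> n = (if n < length ps then Suc n else 0)" for n
  define v where "v = list_env ps (\<lambda>_. e0)"
  have vE: "range v \<subseteq> E" using ps(1) \<open>e0 \<in> E\<close> by (auto simp: v_def list_env_def)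
  have "cons_env x v \<circ> \<tau> = list_env ps (\<lambda>_. x)" for x
    by (rule ext) (simp add: \<tau>_def v_def list_env_def)
  then have mem: "x \<in> X \<longleftrightarrow> sat UNIV I (rename \<tau> \<phi>) (cons_env x v)" for x
    using ps(2)[rule_format, of "\<lambda>_. x"] by (simp add: sat_rename)
  have "sat UNIV I (Ex (rename \<tau> \<phi>)) v" using mem \<open>x0 \<in> X\<close> by auto
  then have "sat E I (Ex (rename \<tau> \<phi>)) v" using elementary vE unfolding elementary_sub_def by blast
  then obtain x where x: "x \<in> E" "sat E I (rename \<tau> \<phi>) (cons_env x v)" by auto
  moreover have "range (cons_env x v) \<subseteq> E"
    using vE x(1) by (auto simp: cons_env_def split: nat.splits) blast
  ultimately have "sat UNIV I (rename \<tau> \<phi>) (cons_env x v)" using elementary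
    unfolding elementary_sub_def by blast
  then show ?thesis using mem x(1) by blast
qed

lemma finite_def_set_subset_E:
  assumes "def_set E X" "finite X" shows "X \<subseteq> E"
  using assms
proof (induction "card X" arbitrary: X)
  case (Suc n)
  then have "X \<noteq> {}" by auto
  define m where "m = Max X"
  have "m \<in> X" using Suc.prems \<open>X \<noteq> {}\<close> unfolding m_def by simp
  have top: "{x \<in> X. \<forall>y\<in>X. y \<le> x} = {m}"
    using Suc.prems \<open>m \<in> X\<close> unfolding m_def by (auto intro: order.antisym)
  have "def_set E {x. x \<in> X \<and> (\<forall>y. y \<in> X \<longrightarrow> y \<le> x)}"
    by (intro def_set_Collect def_pred_intros def_term_intros Suc.prems(1))
  then have "def_set E {m}" using top by (simp add: Ball_def)
  then have "m \<in> E" using def_set_meets_E by blast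
  moreover have "X - {m} \<subseteq> E"
    using Suc.hyps(1)[of "X - {m}"] Suc.hyps(2) Suc.prems \<open>m \<in> X\<close> def_set_Diff[OF _ \<open>def_set E {m}\<close>]
    by simp
  ultimately show ?case by blast
qed simp

lemma def_term_const_in_E: "def_term E (\<lambda>w. c) \<Longrightarrow> c \<in> E"
  using finite_def_set_subset_E[of "{c}"] unfolding def_term_def def_set_def by simp

lemma generic_eventually_in:
  assumes X: "def_set E X" and "b \<notin> E" "b \<in> X"
  shows "eventually (\<lambda>y. y \<in> X) (nhds_of b)"
  using eventually_mem_if_not_boundary[OF \<open>b \<in> X\<close>]
    finite_def_set_subset_E[OF def_set_boundary[OF X] finite_boundary[OF X]] \<open>b \<notin> E\<close> by blast

lemma uminus_in_E: "x \<in> E \<Longrightarrow> - x \<in> E"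
  by (rule def_term_const_in_E) (intro def_term_uminus def_term_param)

lemma uminus_notin_E: "x \<notin> E \<Longrightarrow> - x \<notin> E"
  using uminus_in_E by fastforce

text \<open>The infimum of the points above \<open>b\<close> outside \<open>X\<close> is a boundary point of \<open>X\<close>, hence in \<open>E\<close>.\<close>

lemma generic_right_segment:
  assumes X: "def_set E X" and "b \<notin> E" "b \<in> X"
  shows "(\<forall>y. b \<le> y \<longrightarrow> y \<in> X) \<or> (\<exists>c\<in>E. b < c \<and> (\<forall>y. b \<le> y \<and> y < c \<longrightarrow> y \<in> X))"
proof (cases "\<forall>y. b \<le> y \<longrightarrow> y \<in> X")
  case False
  define S where "S = {y. b \<le> y \<and> y \<notin> X}"
  have "def_set UNIV S"
    unfolding S_def using def_set_mono[OF X]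
    by (intro def_set_Collect def_pred_intros def_term_intros) simp_all
  moreover have "S \<noteq> {}" "bdd_below S" using False unfolding S_def by (auto intro: bdd_belowI)
  ultimately obtain c where c: "is_glb S c" using def_set_has_glb by blast
  have "c \<in> E"
    using is_glb_of_complement_in_boundary[OF \<open>b \<in> X\<close> c[unfolded S_def]]
      finite_def_set_subset_E[OF def_set_boundary[OF X] finite_boundary[OF X]] by blast
  moreover have "b \<le> c" using c unfolding is_glb_def S_def by auto
  then have "b < c" using \<open>b \<notin> E\<close> \<open>c \<in> E\<close> by (cases "b = c") auto
  moreover have "y \<in> X" if "b \<le> y" "y < c" for y
    using is_glb_lower[OF c, of y] that unfolding S_def by (auto simp: not_le[symmetric])
  ultimately show ?thesis by blast
qed simp

lemma generic_no_right_jump: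
  assumes g: "def_fun E g" and "b \<notin> E" and "e > 0"
  shows "\<not> eventually (\<lambda>y. g b + e < g y) (at_right_of b)"
proof
  assume "eventually (\<lambda>y. g b + e < g y) (at_right_of b)"
  define jump where "jump x \<epsilon> \<longleftrightarrow> (\<forall>y. x < y \<and> y < x + \<epsilon> \<longrightarrow> g x + \<epsilon> < g y)" for x \<epsilon>
  have jump_mono: "jump x \<epsilon>'" if "jump x \<epsilon>" "0 < \<epsilon>'" "\<epsilon>' \<le> \<epsilon>" for x \<epsilon> \<epsilon>'
    using that unfolding jump_def by force
  have jump_at: "\<exists>\<epsilon>>0. jump x \<epsilon>" if "e' > 0" and d: "d > 0" "\<forall>y. x < y \<and> y < x + d \<longrightarrow> g x + e' < g y"
    for x e' d
  proof -
    have "jump x (min e' d)" unfolding jump_def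
      using d(2) by (auto intro: order.strict_trans1[OF add_left_mono[OF min.cobounded1]])
    then show ?thesis using \<open>e' > 0\<close> \<open>d > 0\<close> by (intro exI[of _ "min e' d"]) simp
  qed
  have gU: "def_fun UNIV g" using def_fun_mono[OF g] by blast
  define J where "J = {x. \<exists>e>0. \<exists>d>0. \<forall>y. x < y \<and> y < x + d \<longrightarrow> g x + e < g y}"
  have "def_set E J"
    unfolding J_def by (intro def_set_Collect def_pred_intros def_term_intros def_term_app[OF g])
  moreover have "b \<in> J"
    using \<open>e > 0\<close> \<open>eventually _ _\<close> unfolding J_def eventually_at_right_of by blast
  ultimately have "eventually (\<lambda>y. y \<in> J) (nhds_of b)" using generic_eventually_in \<open>b \<notin> E\<close> by blast
  then obtain d where "d > 0" and d: "\<And>x. \<bar>x - b\<bar> < d \<Longrightarrow> x \<in> J"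
    unfolding eventually_nhds_of by blast
  have near: "\<exists>\<epsilon>>0. jump x \<epsilon>" if "x \<in> {b - d<..<b + d}" for x
  proof -
    have "x \<in> J" using d that by (simp add: abs_less_iff)
    then show ?thesis unfolding J_def using jump_at by blast
  qed
  have "\<exists>p q \<epsilon>. p < q \<and> {p<..<q} \<subseteq> {b - d<..<b + d} \<and> 0 < \<epsilon> \<and> (\<forall>x\<in>{p<..<q}. jump x \<epsilon>)"
  proof (rule uniform_on_subinterval)
    show "def_pred UNIV (\<lambda>w. jump (w 0) (w 1))"
      unfolding jump_def by (intro def_pred_intros def_term_intros def_term_app[OF gU])
    show "b - d < b + d" using \<open>d > 0\<close> by simp
  qed (fact jump_mono near)+
  then obtain p q \<epsilon> where "p < q" "0 < \<epsilon>" "\<forall>x\<in>{p<..<q}. jump x \<epsilon>" by blast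
  then show False using def_fun_no_uniform_right_jumps[OF gU \<open>p < q\<close> \<open>0 < \<epsilon>\<close>] unfolding jump_def
    by blast
qed

lemma generic_right_cont:
  assumes g: "def_fun E g" and "b \<notin> E" "e > 0"
  shows "eventually (\<lambda>y. \<bar>g y - g b\<bar> < e) (at_right_of b)"
proof -
  have gU: "def_fun UNIV g" using def_fun_mono[OF g] by blast
  have "eventually (\<lambda>y. g b + e / 2 < g y) (at_right_of b)
      \<or> eventually (\<lambda>y. \<not> g b + e / 2 < g y) (at_right_of b)"
    by (rule def_pred_eventually_right_or_not[of UNIV])
      (intro def_pred_intros def_term_intros def_term_app[OF gU]; simp)
  then have upper: "eventually (\<lambda>y. \<not> g b + e / 2 < g y) (at_right_of b)"
    using generic_no_right_jump[OF g \<open>b \<notin> E\<close>] \<open>e > 0\<close> by simp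
  have "eventually (\<lambda>y. - g b + e / 2 < - g y) (at_right_of b)
      \<or> eventually (\<lambda>y. \<not> - g b + e / 2 < - g y) (at_right_of b)"
    by (rule def_pred_eventually_right_or_not[of UNIV])
      (intro def_pred_intros def_term_intros def_term_app[OF gU]; simp)
  then have lower: "eventually (\<lambda>y. \<not> - g b + e / 2 < - g y) (at_right_of b)"
    using generic_no_right_jump[OF def_fun_uminus[OF g] \<open>b \<notin> E\<close>] \<open>e > 0\<close> by simp
  show ?thesis
    using eventually_conj[OF upper lower]
      by (rule eventually_mono) (use \<open>e > 0\<close> in \<open>auto simp: abs_less_iff\<close>)
qed

lemma generic_cont_at:
  assumes g: "def_fun E g" and "b \<notin> E"
  shows "cont_at g b"
  unfolding cont_at_def tends_to_def
proof (intro allI impI)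
  fix e :: 'u assume "e > 0"
  show "eventually (\<lambda>y. \<bar>g y - g b\<bar> < e) (nhds_of b)"
    using generic_right_cont[OF def_fun_reflect[OF g] uminus_notin_E[OF \<open>b \<notin> E\<close>] \<open>e > 0\<close>]
      generic_right_cont[OF g \<open>b \<notin> E\<close> \<open>e > 0\<close>] \<open>e > 0\<close>
    by (intro eventually_nhds_of_from_sides) simp_all
qed

lemma generic_not_right_slopes_unbounded:
  assumes g: "def_fun E g" and "x0 \<notin> E"
  shows "\<not> right_slopes_unbounded g x0"
proof
  assume "right_slopes_unbounded g x0"
  then have "eventually (\<lambda>t. t \<in> {x. right_slopes_unbounded g x} \<inter> {x. cont_at g x}) (nhds_of x0)"
    using generic_cont_at[OF g \<open>x0 \<notin> E\<close>]
    by (intro generic_eventually_in def_set_Int def_set_right_slopes_unbounded def_set_cont_at g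
        \<open>x0 \<notin> E\<close>) simp
  then obtain d where "d > 0" and d: "\<And>t. \<bar>t - x0\<bar> < d \<Longrightarrow> right_slopes_unbounded g t \<and> cont_at g t"
    unfolding eventually_nhds_of by auto
  define y where "y = x0 + d / 2"
  define M where "M = diff_quot g x0 (y - x0) + 1"
  have "x0 < y" using \<open>d > 0\<close> unfolding y_def by simp
  have near: "\<bar>t - x0\<bar> < d" if "x0 \<le> t" "t \<le> y" for t
    using that \<open>d > 0\<close> unfolding y_def by (simp add: abs_if)
  have "M * (y - x0) \<le> g y - g x0"
    using def_fun_slope_lower_bound[OF def_fun_mono[OF g] \<open>x0 < y\<close>] d near
    unfolding right_slopes_unbounded_def by (meson less_imp_le order_refl subset_UNIV)
  then have "M \<le> diff_quot g x0 (y - x0)"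
    using \<open>x0 < y\<close> by (simp add: diff_quot_def pos_le_divide_eq)
  then show False unfolding M_def by simp
qed

lemma generic_has_right_deriv:
  assumes g: "def_fun E g" and "x0 \<notin> E"
  shows "has_right_deriv g x0 (right_deriv g x0)"
proof -
  have gU: "def_fun UNIV g" using def_fun_mono[OF g] by blast
  have "\<not> right_slopes_unbounded (\<lambda>y. - g y) x0"
    by (rule generic_not_right_slopes_unbounded[OF def_fun_uminus[OF g] \<open>x0 \<notin> E\<close>])
  then obtain L where "has_right_deriv g x0 L"
    using def_fun_right_limit_cases[OF def_fun_diff_quot[OF gU UNIV_I[of x0]], of 0]
      generic_not_right_slopes_unbounded[OF g \<open>x0 \<notin> E\<close>] right_slopes_unbounded_uminus
    unfolding right_slopes_unbounded_def has_right_deriv_def by blast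
  then show ?thesis using right_deriv_eq by metis
qed

lemma generic_eventually_slopes_above:
  assumes g: "def_fun E g" and "b \<notin> E" and "c < right_deriv g b"
  shows "eventually (\<lambda>t. eventually (\<lambda>h. c < diff_quot g t h) (at_right_of 0) \<and> cont_at g t)
    (nhds_of b)"
proof -
  have "eventually (\<lambda>t. t \<in> {x. \<exists>L. has_right_deriv g x L} \<inter> {x. cont_at g x}) (nhds_of b)"
    using generic_has_right_deriv[OF g \<open>b \<notin> E\<close>] generic_cont_at[OF g \<open>b \<notin> E\<close>]
    by (intro generic_eventually_in def_set_Int def_set_has_right_deriv def_set_cont_at g \<open>b \<notin> E\<close>)
      auto
  moreover have
    "eventually (\<lambda>t. \<bar>right_deriv g t - right_deriv g b\<bar> < right_deriv g b - c) (nhds_of b)"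
    using generic_cont_at[OF def_fun_right_deriv[OF g] \<open>b \<notin> E\<close>] assms(3)
    unfolding cont_at_def tends_to_def by simp
  ultimately show ?thesis
  proof eventually_elim
    case (elim t)
    then obtain L where "has_right_deriv g t L" "cont_at g t" by blast
    moreover have "c < L" using elim right_deriv_eq[OF \<open>has_right_deriv g t L\<close>]
      by (simp add: abs_less_iff)
    ultimately show ?case using eventually_slopes_above_if_right_deriv by blast
  qed
qed

text \<open>Otherwise take a slope \<open>c\<close> strictly between the two one-sided derivatives. Near \<open>b\<close> the
  right slopes of \<open>g\<close> exceed \<open>c\<close> and those of its reflection exceed \<open>-c\<close>, so on \<open>[b, b + h]\<close>
  the difference quotient of \<open>g\<close> is both at least and at most \<open>c\<close>; but it tends to the right
  derivative.\<close>

lemma generic_right_deriv_le_left: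
  assumes g: "def_fun E g" and "b \<notin> E"
  shows "right_deriv g b \<le> - right_deriv (\<lambda>x. g (- x)) (- b)"
proof (rule ccontr)
  define g' where "g' x = g (- x)" for x
  define c where "c = (right_deriv g b - right_deriv g' (- b)) / 2"
  assume "\<not> ?thesis"
  then have c: "c < right_deriv g b" "- c < right_deriv g' (- b)"
    unfolding c_def g'_def by (simp_all add: field_simps)
  have g': "def_fun E g'" unfolding g'_def by (rule def_fun_reflect[OF g])
  obtain d1 where "d1 > 0"
    and d1: "\<And>t. \<bar>t - b\<bar> < d1 \<Longrightarrow> eventually (\<lambda>h. c < diff_quot g t h) (at_right_of 0) \<and> cont_at g t"
    using generic_eventually_slopes_above[OF g \<open>b \<notin> E\<close> c(1)] unfolding eventually_nhds_of by blast
  obtain d2 where "d2 > 0"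
    and d2: "\<And>t. \<bar>t + b\<bar> < d2 \<Longrightarrow>
      eventually (\<lambda>h. - c < diff_quot g' t h) (at_right_of 0) \<and> cont_at g' t"
    using generic_eventually_slopes_above[OF g' uminus_notin_E[OF \<open>b \<notin> E\<close>] c(2)]
    unfolding eventually_nhds_of by auto
  have "eventually (\<lambda>h. 0 < h \<and> h < min d1 d2) (at_right_of (0::'u))"
    using \<open>d1 > 0\<close> \<open>d2 > 0\<close> by (intro eventually_at_right_ofI[of "min d1 d2"]) auto
  moreover have
    "eventually (\<lambda>h. \<bar>diff_quot g b h - right_deriv g b\<bar> < right_deriv g b - c) (at_right_of 0)"
    using generic_has_right_deriv[OF g \<open>b \<notin> E\<close>] c(1) unfolding has_right_deriv_def tends_to_def
      by simp
  ultimately have "eventually (\<lambda>h. (0 < h \<and> h < min d1 d2)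
      \<and> \<bar>diff_quot g b h - right_deriv g b\<bar> < right_deriv g b - c) (at_right_of 0)"
    by (rule eventually_conj)
  then obtain h where "(0 < h \<and> h < min d1 d2)
      \<and> \<bar>diff_quot g b h - right_deriv g b\<bar> < right_deriv g b - c"
    using eventually_happens'[OF at_right_of_neq_bot] by blast
  then have h: "0 < h" "h < d1" "h < d2"
    and close: "\<bar>diff_quot g b h - right_deriv g b\<bar> < right_deriv g b - c" by auto
  have "c * h \<le> g (b + h) - g b"
    using def_fun_slope_lower_bound[OF def_fun_mono[OF g] _, of b "b + h" c] d1 h
    by (simp add: abs_if)
  moreover have "- c * h \<le> g' (- b) - g' (- (b + h))"
    using def_fun_slope_lower_bound[OF def_fun_mono[OF g'] _, of "- (b + h)" "- b" "- c"] d2 h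
    by (simp add: abs_if)
  ultimately have "diff_quot g b h = c"
    using h(1) unfolding g'_def diff_quot_def by (simp add: field_simps)
  then show False using close by (simp add: abs_less_iff)
qed

lemma generic_has_deriv_at:
  assumes f: "def_fun E f" and "b \<notin> E"
  shows "has_deriv_at f b (right_deriv f b)"
proof -
  define f' where "f' x = f (- x)" for x
  have f'_deriv: "has_right_deriv f' (- b) (right_deriv f' (- b))"
    unfolding f'_def
      by (rule generic_has_right_deriv[OF def_fun_reflect[OF f] uminus_notin_E[OF \<open>b \<notin> E\<close>]])
  have f_deriv: "has_right_deriv f b (right_deriv f b)"
    by (rule generic_has_right_deriv[OF f \<open>b \<notin> E\<close>])
  have "right_deriv f b \<le> - right_deriv f' (- b)"
    unfolding f'_def by (rule generic_right_deriv_le_left[OF f \<open>b \<notin> E\<close>])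
  moreover have "right_deriv (\<lambda>x. - f x) b \<le> - right_deriv (\<lambda>x. - f' x) (- b)"
    unfolding f'_def by (rule generic_right_deriv_le_left[OF def_fun_uminus[OF f] \<open>b \<notin> E\<close>])
  then have "- right_deriv f b \<le> right_deriv f' (- b)"
    using right_deriv_eq[OF has_right_deriv_uminus[OF f_deriv]]
      right_deriv_eq[OF has_right_deriv_uminus[OF f'_deriv]] by simp
  ultimately have "right_deriv f' (- b) = - right_deriv f b" by simp
  then have "has_right_deriv f' (- b) (- right_deriv f b)" using f'_deriv by simp
  then show ?thesis unfolding f'_def by (rule has_deriv_at_of_one_sided[OF f_deriv])
qed

end

section \<open>Convex subrings and the theorem\<close>

locale convex_cut =
  o_minimal_elementary I E for I :: "'r \<Rightarrow> ('u::linordered_field) list \<Rightarrow> bool" and E +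
  fixes Ov :: "'u set" and b :: 'u
  assumes T_convex: "T_convex I E Ov"
    and b_notin_E: "b \<notin> E"
    and b_above: "\<forall>u\<in>Ov. u < b"
    and b_below: "\<forall>e\<in>E. (\<forall>u\<in>Ov. u < e) \<longrightarrow> b < e"
begin

lemma Ov_subset_E: "Ov \<subseteq> E" and Ov_neq_E: "Ov \<noteq> E" and Ov_one: "1 \<in> Ov"
  and Ov_add: "x \<in> Ov \<Longrightarrow> y \<in> Ov \<Longrightarrow> x + y \<in> Ov"
  and Ov_diff: "x \<in> Ov \<Longrightarrow> y \<in> Ov \<Longrightarrow> x - y \<in> Ov"
  and Ov_mult: "x \<in> Ov \<Longrightarrow> y \<in> Ov \<Longrightarrow> x * y \<in> Ov"
  and Ov_convex: "x \<in> Ov \<Longrightarrow> y \<in> Ov \<Longrightarrow> z \<in> E \<Longrightarrow> x \<le> z \<Longrightarrow> z \<le> y \<Longrightarrow> z \<in> Ov"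
  using T_convex unfolding T_convex_def by blast+

lemma Ov_uminus: "x \<in> Ov \<Longrightarrow> - x \<in> Ov"
  using Ov_diff[OF Ov_diff[OF Ov_one Ov_one]] by simp

lemma Ov_numeral: "numeral n \<in> Ov"
  by (induction n) (auto simp only: numeral.simps intro: Ov_one Ov_add)

lemma E_divide: "x \<in> E \<Longrightarrow> y \<in> E \<Longrightarrow> x / y \<in> E"
  by (rule def_term_const_in_E) (intro def_term_divide def_term_param)

lemma E_inverse: "x \<in> E \<Longrightarrow> inverse x \<in> E"
  by (rule def_term_const_in_E) (intro def_term_inverse def_term_param)

definition above_Ov :: "'u \<Rightarrow> bool" where
  "above_Ov e \<longleftrightarrow> e \<in> E \<and> (\<forall>u\<in>Ov. u < e)"

lemma above_Ov_exists: "\<exists>e. above_Ov e"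
proof -
  obtain e where e: "e \<in> E" "e \<notin> Ov" using Ov_subset_E Ov_neq_E by blast
  have "\<bar>e\<bar> \<in> E" using e(1) uminus_in_E by (cases "0 \<le> e") auto
  moreover have "u < \<bar>e\<bar>" if "u \<in> Ov" for u
  proof (rule ccontr)
    assume "\<not> u < \<bar>e\<bar>"
    then have "- u \<le> e" "e \<le> u" by auto
    then show False using Ov_convex[OF Ov_uminus[OF that] that e(1)] e(2) by blast
  qed
  ultimately show ?thesis unfolding above_Ov_def by blast
qed

lemma above_Ov_gt_one: "above_Ov e \<Longrightarrow> 1 < e"
  unfolding above_Ov_def using Ov_one by blast

lemma above_Ov_half:
  assumes "above_Ov e" shows "above_Ov (e / 2)"
  unfolding above_Ov_def
proof (intro conjI ballI)
  show "e / 2 \<in> E" using assms E_divide Ov_subset_E Ov_numeral unfolding above_Ov_def by blast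
  fix u assume "u \<in> Ov"
  then have "u + u < e" using assms Ov_add unfolding above_Ov_def by blast
  then show "u < e / 2" by simp
qed

lemma b_less_above_Ov: "above_Ov e \<Longrightarrow> b < e"
  using b_below unfolding above_Ov_def by blast

lemma numeral_less_b: "numeral n < b"
  using b_above Ov_numeral by blast

lemma one_less_b: "1 < b"
  using b_above Ov_one by blast

text \<open>The \<open>E\<close>-definable set of points where \<open>\<bar>F\<bar> \<le> r\<close> and the slopes of \<open>F\<close>
  exceed \<open>c\<close> contains the generic point \<open>b\<close>, hence all of \<open>[b, c\<^sub>1)\<close> for some \<open>c\<^sub>1 \<in> E\<close>
  above \<open>b\<close>; such \<open>c\<^sub>1\<close> lies above \<open>Ov\<close>, and so does \<open>c\<^sub>1 / 2 > b\<close>. Integrating the slope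
  bound over \<open>[b, 2 b]\<close> gives the claim.\<close>

lemma right_deriv_bound:
  assumes F: "def_fun E F" and "r \<in> E" "\<bar>F b\<bar> \<le> r" and "c \<in> E" "c < right_deriv F b"
  shows "c * b \<le> 2 * r"
proof -
  define X where "X = {x. \<bar>F x\<bar> \<le> r} \<inter> {x. cont_at F x}
    \<inter> {x. eventually (\<lambda>h. c < diff_quot F x h) (at_right_of 0)}"
  have "def_set E X"
  proof -
    have "def_set E {x. \<bar>F x\<bar> \<le> r}"
      by (intro def_set_Collect def_pred_intros def_term_intros def_term_app[OF F] \<open>r \<in> E\<close>)
    then show ?thesis
      unfolding X_def by (intro def_set_Int def_set_cont_at def_set_slopes_above F \<open>c \<in> E\<close>)
  qed
  moreover have "b \<in> X"
    unfolding X_def using \<open>\<bar>F b\<bar> \<le> r\<close> generic_cont_at[OF F b_notin_E]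
      eventually_slopes_above_if_right_deriv[OF generic_has_right_deriv[OF F b_notin_E] \<open>c < _\<close>]
    by simp
  ultimately consider "\<forall>y. b \<le> y \<longrightarrow> y \<in> X"
    | c1 where "c1 \<in> E" "b < c1" "\<forall>y. b \<le> y \<and> y < c1 \<longrightarrow> y \<in> X"
    using generic_right_segment b_notin_E by blast
  then have X: "t \<in> X" if "b \<le> t" "t \<le> 2 * b" for t
  proof cases
    case (2 c1)
    then have "above_Ov c1" unfolding above_Ov_def using b_above by (auto intro: less_trans)
    then have "2 * b < c1" using b_less_above_Ov[OF above_Ov_half] by (simp add: field_simps)
    then show ?thesis using 2 that by simp
  qed (use that in simp)
  have "0 < b" using one_less_b by simp
  have "c * (2 * b - b) \<le> F (2 * b) - F b"
    using def_fun_slope_lower_bound[OF def_fun_mono[OF F], of b "2 * b" c] X \<open>0 < b\<close>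
    unfolding X_def by simp
  moreover have "\<bar>F (2 * b)\<bar> \<le> r" using X[of "2 * b"] \<open>0 < b\<close> unfolding X_def by simp
  ultimately show ?thesis using \<open>\<bar>F b\<bar> \<le> r\<close> by (simp add: abs_le_iff)
qed

lemma abs_right_deriv_bound:
  assumes f: "def_fun E f" and "r \<in> E" "\<bar>f b\<bar> \<le> r" and "c \<in> E" "c < \<bar>right_deriv f b\<bar>"
  shows "c * b \<le> 2 * r"
proof (cases "c < right_deriv f b")
  case False
  have "right_deriv (\<lambda>x. - f x) b = - right_deriv f b"
    using right_deriv_eq[OF has_right_deriv_uminus[OF generic_has_right_deriv[OF f b_notin_E]]] .
  then have "c < right_deriv (\<lambda>x. - f x) b" using False assms(5)
    by (simp add: abs_if split: if_splits)
  moreover have "\<bar>- f b\<bar> \<le> r" using assms(3) by simp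
  ultimately show ?thesis using right_deriv_bound[OF def_fun_uminus[OF f] \<open>r \<in> E\<close> _ \<open>c \<in> E\<close>]
    by blast
qed (use assms right_deriv_bound in blast)

lemma right_deriv_in_dcl:
  assumes f: "def_fun E f" shows "right_deriv f b \<in> dcl I (insert b E)"
proof (rule dcl_of_def_term)
  have "def_fun (insert b E) (right_deriv f)" using def_fun_right_deriv[OF def_fun_mono[OF f]]
    by blast
  then show "def_term (insert b E) (\<lambda>w. right_deriv f b)"
    by (rule def_term_app[OF _ def_term_param]) simp
qed

lemma max_ideal_Ob_bound:
  assumes "y \<in> max_ideal (Ob I E Ov b)" shows "\<exists>e. above_Ov e \<and> \<bar>y\<bar> \<le> inverse e"
proof (cases "y = 0")
  case True
  obtain e where "above_Ov e" using above_Ov_exists by blast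
  moreover have "0 < inverse e" using above_Ov_gt_one[OF calculation] by simp
  ultimately show ?thesis using True by auto
next
  case False
  have "y \<in> dcl I (insert b E)" and non_unit: "\<forall>z\<in>Ob I E Ov b. y * z \<noteq> 1"
    using assms unfolding max_ideal_def Ob_def by auto
  then have "inverse y \<notin> Ob I E Ov b" using False by auto
  moreover have "inverse y \<in> dcl I (insert b E)" using dcl_inverse \<open>y \<in> dcl _ _\<close> by blast
  ultimately obtain e where "above_Ov e" "e \<le> \<bar>inverse y\<bar>"
    unfolding Ob_def above_Ov_def by (auto simp: not_less)
  moreover have "0 < e" using above_Ov_gt_one[OF \<open>above_Ov e\<close>] by simp
  ultimately have "inverse (inverse \<bar>y\<bar>) \<le> inverse e"
    by (intro le_imp_inverse_le) (simp_all add: abs_inverse)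
  then show ?thesis using \<open>above_Ov e\<close> by auto
qed

lemma max_ideal_ObI:
  assumes "y \<in> dcl I (insert b E)" "above_Ov e" "\<bar>y\<bar> \<le> inverse e"
  shows "y \<in> max_ideal (Ob I E Ov b)"
proof -
  have "1 < e" using above_Ov_gt_one[OF assms(2)] .
  then have "\<bar>y\<bar> < 1" using assms(3) by (simp add: inverse_less_1_iff order.strict_trans1)
  then have "y \<in> Ob I E Ov b" unfolding Ob_def using assms(1) Ov_one by force
  moreover have "y * z \<noteq> 1" if "z \<in> Ob I E Ov b" for z
  proof -
    have "\<bar>z\<bar> < e" using that assms(2) unfolding Ob_def above_Ov_def by blast
    have "\<bar>y\<bar> * \<bar>z\<bar> \<le> inverse e * \<bar>z\<bar>" using assms(3) by (rule mult_right_mono) simp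
    also have "\<dots> < inverse e * e" using \<open>\<bar>z\<bar> < e\<close> \<open>1 < e\<close> by (intro mult_strict_left_mono) simp_all
    also have "\<dots> = 1" using \<open>1 < e\<close> by simp
    finally show ?thesis by (auto simp flip: abs_mult)
  qed
  ultimately show ?thesis unfolding max_ideal_def by blast
qed

lemma max_ideal_Ob_minus_small:
  assumes "y \<in> max_ideal (Ob_minus I E Ov b)" "u \<in> Ov" "0 < u"
  shows "\<bar>y\<bar> * u < 1"
proof (rule ccontr)
  assume "\<not> \<bar>y\<bar> * u < 1"
  then have "1 \<le> \<bar>y\<bar> * u" by simp
  then have "y \<noteq> 0" by auto
  with \<open>1 \<le> \<bar>y\<bar> * u\<close> have "\<bar>inverse y\<bar> \<le> u" by (simp add: abs_inverse field_simps)
  have "y \<in> dcl I (insert b E)" and unit: "\<forall>z\<in>Ob_minus I E Ov b. y * z \<noteq> 1"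
    using assms(1) unfolding max_ideal_def Ob_minus_def by auto
  then have "inverse y \<in> dcl I (insert b E)" using dcl_inverse by blast
  moreover have "- u \<le> inverse y" "inverse y \<le> u"
    using \<open>\<bar>inverse y\<bar> \<le> u\<close> unfolding abs_le_iff by linarith+
  ultimately have "inverse y \<in> Ob_minus I E Ov b"
    unfolding Ob_minus_def using Ov_uminus[OF \<open>u \<in> Ov\<close>] \<open>u \<in> Ov\<close> by blast
  then show False using unit \<open>y \<noteq> 0\<close> by auto
qed

lemma max_ideal_Ob_minusI:
  assumes "y \<in> dcl I (insert b E)" and small: "\<And>u. u \<in> Ov \<Longrightarrow> 0 < u \<Longrightarrow> \<bar>y\<bar> * u < 1"
  shows "y \<in> max_ideal (Ob_minus I E Ov b)"
proof -
  have "\<bar>y\<bar> < 1" using small[OF Ov_one] by simp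
  then have "- 1 \<le> y" "y \<le> 1" by auto
  then have "y \<in> Ob_minus I E Ov b"
    unfolding Ob_minus_def using assms(1) Ov_one Ov_uminus[OF Ov_one] by blast
  moreover have "y * z \<noteq> 1" if z: "z \<in> Ob_minus I E Ov b" for z
  proof -
    obtain o1 o2 where "o1 \<in> Ov" "o2 \<in> Ov" "o1 \<le> z" "z \<le> o2" using z unfolding Ob_minus_def by blast
    define u where "u = \<bar>o1\<bar> + \<bar>o2\<bar> + 1"
    have "u \<in> Ov" "0 < u" "\<bar>z\<bar> \<le> u"
      using Ov_add Ov_one Ov_uminus \<open>o1 \<in> Ov\<close> \<open>o2 \<in> Ov\<close> \<open>o1 \<le> z\<close> \<open>z \<le> o2\<close> unfolding u_def
      by (auto simp: abs_if)
    then have "\<bar>y\<bar> * \<bar>z\<bar> < 1" using small[of u]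
      by (meson abs_ge_zero mult_left_mono order.strict_trans1)
    then show ?thesis by (auto simp flip: abs_mult)
  qed
  ultimately show ?thesis unfolding max_ideal_def by blast
qed

lemma right_deriv_in_max_ideal_Ob:
  assumes f: "def_fun E f" and "f b \<in> max_ideal (Ob I E Ov b)"
  shows "right_deriv f b \<in> max_ideal (Ob I E Ov b)"
proof -
  obtain e where e: "above_Ov e" "\<bar>f b\<bar> \<le> inverse e" using max_ideal_Ob_bound assms(2) by blast
  have "inverse e \<in> E" "0 < e" using e(1) E_inverse above_Ov_gt_one unfolding above_Ov_def by force+
  have "\<bar>right_deriv f b\<bar> \<le> inverse e"
  proof (rule ccontr)
    assume "\<not> ?thesis"
    then have "inverse e * b \<le> 2 * inverse e"
      using abs_right_deriv_bound[OF f \<open>inverse e \<in> E\<close> e(2) \<open>inverse e \<in> E\<close>] by simp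
    moreover have "2 < b" by (rule numeral_less_b)
    ultimately show False using \<open>0 < e\<close> by simp
  qed
  then show ?thesis using max_ideal_ObI right_deriv_in_dcl[OF f] e(1) by blast
qed

lemma right_deriv_in_max_ideal_Ob_minus:
  assumes f: "def_fun E f" and "f b \<in> max_ideal (Ob_minus I E Ov b)"
  shows "right_deriv f b \<in> max_ideal (Ob_minus I E Ov b)"
proof (rule max_ideal_Ob_minusI[OF right_deriv_in_dcl[OF f]])
  fix u assume "u \<in> Ov" "0 < u"
  show "\<bar>right_deriv f b\<bar> * u < 1"
  proof (rule ccontr)
    assume large: "\<not> \<bar>right_deriv f b\<bar> * u < 1"
    have "4 * u \<in> Ov" using Ov_mult[OF Ov_numeral \<open>u \<in> Ov\<close>] .
    then have "\<bar>f b\<bar> * (4 * u) < 1" using max_ideal_Ob_minus_small assms(2) \<open>0 < u\<close> by simp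
    then have "\<bar>f b\<bar> \<le> inverse (4 * u)" using \<open>0 < u\<close> by (simp add: field_simps)
    moreover have "inverse (2 * u) < \<bar>right_deriv f b\<bar>"
      using large \<open>0 < u\<close> by (simp add: field_simps)
    moreover have "inverse (4 * u) \<in> E" "inverse (2 * u) \<in> E"
      using Ov_subset_E Ov_mult[OF Ov_numeral \<open>u \<in> Ov\<close>] E_inverse by blast+
    ultimately have "inverse (2 * u) * b \<le> 2 * inverse (4 * u)"
      using abs_right_deriv_bound[OF f] by blast
    then have "b \<le> 1" using \<open>0 < u\<close> by (simp add: field_simps)
    then show False using one_less_b by simp
  qed
qed

end

theorem lemma2p24:
  fixes I :: "'r \<Rightarrow> ('u::linordered_field) list \<Rightarrow> bool"
    and E Ov :: "'u set" and b :: 'u and f :: "'u \<Rightarrow> 'u"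
  assumes lt_def: "definable_rel UNIV I {} 2 (\<lambda>xs. xs ! 0 < xs ! 1)"
    and add_def: "definable_rel UNIV I {} 3 (\<lambda>xs. xs ! 2 = xs ! 0 + xs ! 1)"
    and mult_def: "definable_rel UNIV I {} 3 (\<lambda>xs. xs ! 2 = xs ! 0 * xs ! 1)"
    and omin_U: "o_minimal UNIV I"
    and omin_E: "o_minimal E I"
    and elem: "elementary_sub I E"
    and conv: "T_convex I E Ov"
    and b_notin: "b \<notin> E"
    and b_above: "\<forall>u\<in>Ov. u < b"
    and b_below: "\<forall>e\<in>E. (\<forall>u\<in>Ov. u < e) \<longrightarrow> b < e"
    and f_def: "definable_fun UNIV I E f"
  shows "(f b \<in> max_ideal (Ob I E Ov b) \<longrightarrow>
            (\<exists>d. has_deriv_at f b d \<and> d \<in> max_ideal (Ob I E Ov b))) \<and>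
         (f b \<in> max_ideal (Ob_minus I E Ov b) \<longrightarrow>
            (\<exists>d. has_deriv_at f b d \<and> d \<in> max_ideal (Ob_minus I E Ov b)))"
proof -
  interpret convex_cut I E Ov b
    by unfold_locales (fact lt_def add_def mult_def omin_U elem conv b_notin b_above b_below)+
  have f: "def_fun E f" by (rule def_fun_of_definable_fun[OF f_def E_nonempty])
  show ?thesis
    using generic_has_deriv_at[OF f b_notin] right_deriv_in_max_ideal_Ob[OF f]
      right_deriv_in_max_ideal_Ob_minus[OF f] by blast
qed

end
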